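(* Let $N\ge1$, $i\in\langle N\rangle$ and let $u$ be a word over $\langle N\rangle$ with $|u|\ge 2$. Then the antipode of the interval partition Hopf algebra $\mathcal H^N$ satisfies \[ S_{\mathcal H}(Y_u^i)=\sum_{T\in \mathbf{RT}_u^i}(-1)^{\mathbf v(T)}\,\Lambda_{\uparrow r}(T). \]
   Context: Let $\langle N\rangle=\{1,\dots,N\}$. For a word $u=u(1)\cdots u(p)$ over $\langle N\rangle$ write $|u|=p$. The interval partition Hopf algebra $\mathcal H=\mathcal H^N$ is, as an algebra, the free unital associative complex algebra on generators $Y_u^i$ ($i\in\langle N\rangle$, $|u|\ge 2$); one sets $Y_j^i=\delta_{ij}1$ for single letters $i,j$. Its counit $\varepsilon$ is the algebra homomorphism with $\varepsilon(Y_u^i)=0$, and its comultiplication is the algebra homomorphism $\Delta$ with $\Delta(Y_u^i)=\sum_{q=1}^{p}\sum_{(C_1,\dots,C_q)}\sum_{v\in\langle N\rangle^q} Y_{u|C_1}^{v(1)}\cdots Y_{u|C_q}^{v(q)}\otimes Y_v^i$, where $p=|u|$, the middle sum is over all partitions of $\{1,\dots,p\}$ into $q$ nonempty consecutive intervals $C_1<\dots<C_q$, and $u|C_k$ is the subword of $u$ indexed by $C_k$. It is a connected graded bialgebra with antipode $S_{\mathcal H}$. Trees: a colored planar tree is a finite rooted tree in which the children of each vertex are linearly ordered (left to right) and each vertex $x$ has a color $c(x)\in\langle N\rangle$, up to isomorphism preserving root, child orders and colors. A leaf has no children. A tree is reduced if every non-leaf vertex has at least two children. $\mathbf{RT}_u^i$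 is the set of reduced colored planar trees whose root has color $i$ and whose leaves, read left to right, have colors $u(1),\dots,u(p)$. For a non-leaf vertex $x$ with children $y_1<\dots<y_k$, $Y(x)=Y^{c(x)}_{c(y_1)\cdots c(y_k)}$. $\mathbf v(T)$ is the number of non-leaf vertices. $\Lambda_{\uparrow r}(T)=Y(y_1)\cdots Y(y_r)$ where $y_1,\dots,y_r$ are the non-leaf vertices in the order $\prec_r$ defined by: $x\prec_r y$ iff either $y$ is a proper ancestor of $x$, or, letting $z$ be the nearest common ancestor of $x$ and $y$, the child of $z$ on the path to $x$ lies to the right of the child of $z$ on the path to $y$ (equivalently: postorder with children visited from right to left; the root comes last). *)

theory Defs
  imports Complex_Main "HOL-Library.Poly_Mapping"
begin

text \<open>A generator Y_u^i is encoded as the pair (i, u).  A monomial (word in the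
generators) is a list of generators; the empty list is the unit 1.  An element of the
free associative complex algebra is a finitely supported map from monomials to complex
numbers.  The tensor square is modelled by finitely supported maps on pairs of monomials.\<close>

type_synonym gen = "nat \<times> nat list"
type_synonym mon = "gen list"
type_synonym hel = "mon \<Rightarrow>\<^sub>0 complex"
type_synonym hhel = "(mon \<times> mon) \<Rightarrow>\<^sub>0 complex"

definition hscale :: "complex \<Rightarrow> hel \<Rightarrow> hel" where
  "hscale c x = Poly_Mapping.map (\<lambda>v. c * v) x"

definition hhscale :: "complex \<Rightarrow> hhel \<Rightarrow> hhel" where
  "hhscale c x = Poly_Mapping.map (\<lambda>v. c * v) x"

definition hone :: hel where
  "hone = Poly_Mapping.single [] 1"

definition hmult :: "hel \<Rightarrow> hel \<Rightarrow> hel" where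
  "hmult x y = (\<Sum>a\<in>Poly_Mapping.keys x. \<Sum>b\<in>Poly_Mapping.keys y.
      Poly_Mapping.single (a @ b) (Poly_Mapping.lookup x a * Poly_Mapping.lookup y b))"

definition hprod :: "hel list \<Rightarrow> hel" where
  "hprod xs = foldr hmult xs hone"

definition tens :: "hel \<Rightarrow> hel \<Rightarrow> hhel" where
  "tens x y = (\<Sum>a\<in>Poly_Mapping.keys x. \<Sum>b\<in>Poly_Mapping.keys y.
      Poly_Mapping.single (a, b) (Poly_Mapping.lookup x a * Poly_Mapping.lookup y b))"

definition hhone :: hhel where
  "hhone = Poly_Mapping.single ([], []) 1"

definition hhmult :: "hhel \<Rightarrow> hhel \<Rightarrow> hhel" where
  "hhmult x y = (\<Sum>p\<in>Poly_Mapping.keys x. \<Sum>q\<in>Poly_Mapping.keys y.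
      Poly_Mapping.single (fst p @ fst q, snd p @ snd q) (Poly_Mapping.lookup x p * Poly_Mapping.lookup y q))"

definition hhprod :: "hhel list \<Rightarrow> hhel" where
  "hhprod xs = foldr hhmult xs hhone"

text \<open>Y_u^i, with the convention Y_j^i = delta_ij 1 for single letters.\<close>

definition Y :: "nat \<Rightarrow> nat list \<Rightarrow> hel" where
  "Y i u = (if length u = 1 then (if u = [i] then hone else 0)
            else Poly_Mapping.single [(i, u)] 1)"

definition valid_gen :: "nat \<Rightarrow> gen \<Rightarrow> bool" where
  "valid_gen N g \<longleftrightarrow> fst g \<in> {1..N} \<and> 2 \<le> length (snd g) \<and> set (snd g) \<subseteq> {1..N}"

definition valid_mon :: "nat \<Rightarrow> mon \<Rightarrow> bool" where
  "valid_mon N m \<longleftrightarrow> (\<forall>g\<in>set m. valid_gen N g)"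

definition Hcarrier :: "nat \<Rightarrow> hel set" where
  "Hcarrier N = {x. \<forall>m\<in>Poly_Mapping.keys x. valid_mon N m}"

text \<open>Partitions of a word into consecutive nonempty intervals, given as the list of
subwords u|C_1, ..., u|C_q (in order).\<close>

definition interval_splits :: "'a list \<Rightarrow> 'a list list set" where
  "interval_splits u = {cs. concat cs = u \<and> (\<forall>c\<in>set cs. c \<noteq> [])}"

definition words :: "nat \<Rightarrow> nat \<Rightarrow> nat list set" where
  "words N q = {v. length v = q \<and> set v \<subseteq> {1..N}}"

definition Delta_gen :: "nat \<Rightarrow> gen \<Rightarrow> hhel" where
  "Delta_gen N g = (\<Sum>cs\<in>interval_splits (snd g). \<Sum>v\<in>words N (length cs).
      tens (hprod (map (\<lambda>k. Y (v ! k) (cs ! k)) [0..<length cs])) (Y (fst g) v))"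

definition Delta_mon :: "nat \<Rightarrow> mon \<Rightarrow> hhel" where
  "Delta_mon N m = hhprod (map (Delta_gen N) m)"

definition Delta :: "nat \<Rightarrow> hel \<Rightarrow> hhel" where
  "Delta N x = (\<Sum>m\<in>Poly_Mapping.keys x. hhscale (Poly_Mapping.lookup x m) (Delta_mon N m))"

text \<open>Counit: the algebra homomorphism killing all generators, i.e. the coefficient of 1.\<close>

definition eps :: "hel \<Rightarrow> complex" where
  "eps x = Poly_Mapping.lookup x []"

text \<open>For a linear map S, m o (S (x) id) o Delta and m o (id (x) S) o Delta.\<close>

definition conv_left :: "nat \<Rightarrow> (hel \<Rightarrow> hel) \<Rightarrow> hel \<Rightarrow> hel" where
  "conv_left N S x = (\<Sum>p\<in>Poly_Mapping.keys (Delta N x).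
      hscale (Poly_Mapping.lookup (Delta N x) p) (hmult (S (Poly_Mapping.single (fst p) 1))
                                         (Poly_Mapping.single (snd p) 1)))"

definition conv_right :: "nat \<Rightarrow> (hel \<Rightarrow> hel) \<Rightarrow> hel \<Rightarrow> hel" where
  "conv_right N S x = (\<Sum>p\<in>Poly_Mapping.keys (Delta N x).
      hscale (Poly_Mapping.lookup (Delta N x) p) (hmult (Poly_Mapping.single (fst p) 1)
                                         (S (Poly_Mapping.single (snd p) 1))))"

definition is_linear :: "(hel \<Rightarrow> hel) \<Rightarrow> bool" where
  "is_linear S \<longleftrightarrow> (\<forall>x. S x = (\<Sum>m\<in>Poly_Mapping.keys x. hscale (Poly_Mapping.lookup x m) (S (Poly_Mapping.single m 1))))"

text \<open>The antipode of H^N: the unique linear endomorphism of H^N (extended by 0 on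
monomials not in H^N) with m(S (x) id)Delta = m(id (x) S)Delta = eta eps.\<close>

definition antipode :: "nat \<Rightarrow> hel \<Rightarrow> hel" where
  "antipode N = (THE S. is_linear S
      \<and> (\<forall>m. \<not> valid_mon N m \<longrightarrow> S (Poly_Mapping.single m 1) = 0)
      \<and> (\<forall>x\<in>Hcarrier N. conv_left N S x = hscale (eps x) hone)
      \<and> (\<forall>x\<in>Hcarrier N. conv_right N S x = hscale (eps x) hone))"

text \<open>Node c ts: a vertex of color c whose children (left to right) are ts.  Planar
isomorphism classes correspond exactly to elements of this datatype.\<close>

datatype ctree = Node nat "ctree list"

fun root_color :: "ctree \<Rightarrow> nat" where
  "root_color (Node c ts) = c"

fun colors :: "ctree \<Rightarrow> nat set" where
  "colors (Node c ts) = insert c (\<Union>t\<in>set ts. colors t)"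

fun reduced :: "ctree \<Rightarrow> bool" where
  "reduced (Node c ts) = ((ts = [] \<or> 2 \<le> length ts) \<and> (\<forall>t\<in>set ts. reduced t))"

fun leaf_word :: "ctree \<Rightarrow> nat list" where
  "leaf_word (Node c ts) = (if ts = [] then [c] else concat (map leaf_word ts))"

fun nvert :: "ctree \<Rightarrow> nat" where
  "nvert (Node c ts) = (if ts = [] then 0 else Suc (sum_list (map nvert ts)))"

text \<open>Non-leaf vertices in the order prec_r (postorder, children visited right to left,
root last), each recorded as (color, word of children colors), i.e. Y(x).\<close>

fun inner_r :: "ctree \<Rightarrow> (nat \<times> nat list) list" where
  "inner_r (Node c ts) = (if ts = [] then []
     else concat (map inner_r (rev ts)) @ [(c, map root_color ts)])"

definition Lambda_r :: "ctree \<Rightarrow> hel" where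
  "Lambda_r T = hprod (map (\<lambda>(c, w). Y c w) (inner_r T))"

definition RT :: "nat \<Rightarrow> nat \<Rightarrow> nat list \<Rightarrow> ctree set" where
  "RT N i u = {T. reduced T \<and> colors T \<subseteq> {1..N} \<and> root_color T = i \<and> leaf_word T = u}"

end

(*
  The antipode is the convolution inverse of the identity. Since the coproduct is
  coassociative, convolution is associative, so a left inverse of the identity agrees with
  the right inverse, which exists by recursion on the degree; it therefore suffices to show
  that the anti-multiplicative map S given on generators by the signed tree sums satisfies
  S * id = eta o eps.  Coassociativity on a generator is a bijection between refining each
  block of a blocking and blocking the color word of a finer blocking.

  On a generator Y_u^i, (S * id)(Y_u^i) is a sum over the blockings of u.  The blockings with a
  single block contribute the tree sum of Y_u^i.  A blocking with at least two blocks together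
  with a reduced tree for each block is the same as a reduced tree with root color i whose root
  has at least two children, and grafting multiplies Lambda by the root factor and changes the
  sign, so these blockings contribute minus the tree sum.
*)
theory Submission
  imports Defs
begin

definition scale_pm :: "complex \<Rightarrow> ('k \<Rightarrow>\<^sub>0 complex) \<Rightarrow> ('k \<Rightarrow>\<^sub>0 complex)" where
  "scale_pm c x = Poly_Mapping.map (\<lambda>v. c * v) x"

lemma lookup_scale_pm [simp]: "Poly_Mapping.lookup (scale_pm c x) k = c * Poly_Mapping.lookup x k"
  unfolding scale_pm_def by transfer (simp add: when_def)

lemma hscale_eq_scale_pm: "hscale = scale_pm"
  by (intro ext) (simp add: hscale_def scale_pm_def)

lemma hhscale_eq_scale_pm: "hhscale = scale_pm"
  by (intro ext) (simp add: hhscale_def scale_pm_def)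

lemma scale_pm_add [simp]: "scale_pm c (x + y) = scale_pm c x + scale_pm c y"
  by (rule poly_mapping_eqI) (simp add: lookup_add algebra_simps)

lemma scale_pm_add_left: "scale_pm (c + d) x = scale_pm c x + scale_pm d x"
  by (rule poly_mapping_eqI) (simp add: lookup_add algebra_simps)

lemma scale_pm_zero [simp]: "scale_pm c 0 = 0"
  by (rule poly_mapping_eqI) simp

lemma scale_pm_zero_left [simp]: "scale_pm 0 x = 0"
  by (rule poly_mapping_eqI) simp

lemma scale_pm_one [simp]: "scale_pm 1 x = x"
  by (rule poly_mapping_eqI) simp

lemma scale_pm_scale_pm [simp]: "scale_pm c (scale_pm d x) = scale_pm (c * d) x"
  by (rule poly_mapping_eqI) simp

lemma scale_pm_single [simp]: "scale_pm c (Poly_Mapping.single k d) = Poly_Mapping.single k (c * d)"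
  by (rule poly_mapping_eqI) (simp add: lookup_single when_def)

lemma scale_pm_sum: "scale_pm c (sum f A) = (\<Sum>a\<in>A. scale_pm c (f a))"
  by (induction A rule: infinite_finite_induct) auto

lemma scale_pm_minus_one: "scale_pm (-1) x = - x"
  by (rule poly_mapping_eqI) simp

lemma keys_scale_pm: "Poly_Mapping.keys (scale_pm c x) \<subseteq> Poly_Mapping.keys x"
  by (auto simp: in_keys_iff)

definition lin_ext :: "('k \<Rightarrow> ('l \<Rightarrow>\<^sub>0 complex)) \<Rightarrow> ('k \<Rightarrow>\<^sub>0 complex) \<Rightarrow> ('l \<Rightarrow>\<^sub>0 complex)" where
  "lin_ext f x = (\<Sum>k\<in>Poly_Mapping.keys x. scale_pm (Poly_Mapping.lookup x k) (f k))"

lemma lin_ext_superset: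
  assumes "finite K" "Poly_Mapping.keys x \<subseteq> K"
  shows "lin_ext f x = (\<Sum>k\<in>K. scale_pm (Poly_Mapping.lookup x k) (f k))"
  unfolding lin_ext_def
  by (rule sum.mono_neutral_left) (use assms in \<open>auto simp: in_keys_iff\<close>)

lemma lin_ext_add [simp]: "lin_ext f (x + y) = lin_ext f x + lin_ext f y"
proof -
  let ?K = "Poly_Mapping.keys x \<union> Poly_Mapping.keys y"
  have "Poly_Mapping.keys (x + y) \<subseteq> ?K" by (rule keys_add)
  then show ?thesis
    by (subst (1 2 3) lin_ext_superset[of ?K]) (auto simp: lookup_add scale_pm_add_left sum.distrib)
qed

lemma lin_ext_zero [simp]: "lin_ext f 0 = 0"
  by (simp add: lin_ext_def)

lemma lin_ext_single [simp]: "lin_ext f (Poly_Mapping.single k c) = scale_pm c (f k)"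
  by (cases "c = 0") (auto simp: lin_ext_def)

lemma lin_ext_scale_pm [simp]: "lin_ext f (scale_pm c x) = scale_pm c (lin_ext f x)"
  by (subst (1 2) lin_ext_superset[of "Poly_Mapping.keys x"])
    (auto simp: in_keys_iff scale_pm_sum mult.commute)

lemma lin_ext_sum [simp]: "lin_ext f (sum g A) = (\<Sum>a\<in>A. lin_ext f (g a))"
  by (induction A rule: infinite_finite_induct) auto

lemma lin_ext_cong:
  "(\<And>k. k \<in> Poly_Mapping.keys x \<Longrightarrow> f k = g k) \<Longrightarrow> lin_ext f x = lin_ext g x"
  by (simp add: lin_ext_def)

lemma lin_ext_fun_add: "lin_ext (\<lambda>k. f k + g k) x = lin_ext f x + lin_ext g x"
  by (simp add: lin_ext_def sum.distrib)

lemma lin_ext_fun_zero [simp]: "lin_ext (\<lambda>k. 0) x = 0"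
  by (simp add: lin_ext_def)

lemma lin_ext_fun_scale_pm: "lin_ext (\<lambda>k. scale_pm c (f k)) x = scale_pm c (lin_ext f x)"
  by (simp add: lin_ext_def scale_pm_sum mult.commute)

lemma lin_ext_fun_sum: "lin_ext (\<lambda>k. \<Sum>j\<in>J. f j k) x = (\<Sum>j\<in>J. lin_ext (f j) x)"
  by (simp add: lin_ext_def scale_pm_sum sum.swap[of _ J])

lemma lin_ext_basis [simp]: "lin_ext (\<lambda>k. Poly_Mapping.single k 1) x = x"
  by (rule poly_mapping_eqI) (simp add: lin_ext_def lookup_sum lookup_single when_def in_keys_iff)

lemma lin_ext_lin_ext: "lin_ext f (lin_ext g x) = lin_ext (\<lambda>k. lin_ext f (g k)) x"
  unfolding lin_ext_def[of g] by (simp add: lin_ext_def[of _ x])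

lemma lin_ext_swap:
  "lin_ext (\<lambda>a. lin_ext (\<lambda>b. G a b) y) x = lin_ext (\<lambda>b. lin_ext (\<lambda>a. G a b) x) y"
  by (simp add: lin_ext_def scale_pm_sum sum.swap[of _ "Poly_Mapping.keys x"] mult.commute)

lemma lin_ext_single_scaled: "lin_ext (\<lambda>a. Poly_Mapping.single a c) x = scale_pm c x"
  using lin_ext_fun_scale_pm[of c "\<lambda>a. Poly_Mapping.single a 1" x] by simp

lemma lin_ext_delta: "lin_ext (\<lambda>a. if a = k then F a else 0) x = scale_pm (Poly_Mapping.lookup x k) (F k)"
proof (cases "k \<in> Poly_Mapping.keys x")
  case True
  then show ?thesis
    by (simp add: lin_ext_def if_distrib[of "scale_pm _"] cong: if_cong)
next
  case False
  then have "lin_ext (\<lambda>a. if a = k then F a else 0) x = lin_ext (\<lambda>_. 0) x"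
    by (intro lin_ext_cong) auto
  with False show ?thesis by (simp add: in_keys_iff)
qed

lemma keys_sum_subset: "Poly_Mapping.keys (sum f A) \<subseteq> (\<Union>a\<in>A. Poly_Mapping.keys (f a))"
  by (induction A rule: infinite_finite_induct) (auto dest: subsetD[OF keys_add])

lemma keys_lin_ext:
  "Poly_Mapping.keys (lin_ext f x) \<subseteq> (\<Union>k\<in>Poly_Mapping.keys x. Poly_Mapping.keys (f k))"
  unfolding lin_ext_def using keys_sum_subset keys_scale_pm by fastforce

lemma lin_map_eqI:
  assumes "\<And>k. k \<in> Poly_Mapping.keys x \<Longrightarrow> F (Poly_Mapping.single k 1) = G (Poly_Mapping.single k 1)"
    and "\<And>f. F (lin_ext f x) = lin_ext (\<lambda>k. F (f k)) x"
    and "\<And>f. G (lin_ext f x) = lin_ext (\<lambda>k. G (f k)) x"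
  shows "F x = G x"
proof -
  have "F x = lin_ext (\<lambda>k. F (Poly_Mapping.single k 1)) x"
    using assms(2)[of "\<lambda>k. Poly_Mapping.single k 1"] by simp
  also have "\<dots> = lin_ext (\<lambda>k. G (Poly_Mapping.single k 1)) x"
    by (rule lin_ext_cong) (rule assms(1))
  also have "\<dots> = G x"
    using assms(3)[of "\<lambda>k. Poly_Mapping.single k 1"] by simp
  finally show ?thesis .
qed

definition bilin :: "('a \<Rightarrow> 'b \<Rightarrow> 'c) \<Rightarrow> ('a \<Rightarrow>\<^sub>0 complex) \<Rightarrow> ('b \<Rightarrow>\<^sub>0 complex) \<Rightarrow> ('c \<Rightarrow>\<^sub>0 complex)" where
  "bilin op x y = lin_ext (\<lambda>a. lin_ext (\<lambda>b. Poly_Mapping.single (op a b) 1) y) x"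

lemma bilin_lin_ext_left: "bilin op (lin_ext f x) y = lin_ext (\<lambda>k. bilin op (f k) y) x"
  by (simp add: bilin_def lin_ext_lin_ext)

lemma bilin_lin_ext_right: "bilin op x (lin_ext f y) = lin_ext (\<lambda>k. bilin op x (f k)) y"
  unfolding bilin_def lin_ext_lin_ext by (rule lin_ext_swap)

lemma bilin_single [simp]:
  "bilin op (Poly_Mapping.single a c) (Poly_Mapping.single b d) = Poly_Mapping.single (op a b) (c * d)"
  by (simp add: bilin_def mult.commute)

lemma bilin_single_left:
  "bilin op (Poly_Mapping.single a 1) y = lin_ext (\<lambda>b. Poly_Mapping.single (op a b) 1) y"
  by (simp add: bilin_def)

lemma bilin_zero_left [simp]: "bilin op 0 y = 0"
  by (simp add: bilin_def)

lemma bilin_zero_right [simp]: "bilin op x 0 = 0"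
  by (simp add: bilin_def)

lemma bilin_scale_left [simp]: "bilin op (scale_pm c x) y = scale_pm c (bilin op x y)"
  by (simp add: bilin_def)

lemma bilin_scale_right [simp]: "bilin op x (scale_pm c y) = scale_pm c (bilin op x y)"
  by (simp add: bilin_def lin_ext_fun_scale_pm)

lemma bilin_sum_left: "bilin op (sum f A) y = (\<Sum>a\<in>A. bilin op (f a) y)"
  by (simp add: bilin_def)

lemma bilin_sum_right: "bilin op x (sum f A) = (\<Sum>a\<in>A. bilin op x (f a))"
  by (simp add: bilin_def lin_ext_fun_sum)

lemma bilin_swap: "bilin (\<lambda>a b. op b a) x y = bilin op y x"
  unfolding bilin_def by (rule lin_ext_swap)

lemma bilin_assoc:
  assumes "\<And>a b c. op2 (op1 a b) c = op4 a (op3 b c)"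
  shows "bilin op2 (bilin op1 x y) z = bilin op4 x (bilin op3 y z)"
  by (simp add: bilin_def lin_ext_lin_ext assms)

lemma lin_ext_bilin:
  assumes "\<And>a b. \<phi> (op a b) = bilin op' (\<phi> a) (\<phi> b)"
  shows "lin_ext \<phi> (bilin op x y) = bilin op' (lin_ext \<phi> x) (lin_ext \<phi> y)"
proof -
  have "lin_ext \<phi> (bilin op x y) = lin_ext (\<lambda>a. lin_ext (\<lambda>b. bilin op' (\<phi> a) (\<phi> b)) y) x"
    by (simp add: bilin_def[of op] lin_ext_lin_ext assms)
  also have "\<dots> = bilin op' (lin_ext \<phi> x) (lin_ext \<phi> y)"
    unfolding bilin_lin_ext_left bilin_lin_ext_right by (rule lin_ext_swap)
  finally show ?thesis .
qed

lemma lin_ext_bilin_single_left: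
  "lin_ext \<Phi> (bilin op (Poly_Mapping.single a 1) x) = lin_ext (\<lambda>q. \<Phi> (op a q)) x"
  by (simp add: bilin_def lin_ext_lin_ext)

lemma lin_ext_bilin_single_right:
  "lin_ext \<Phi> (bilin op x (Poly_Mapping.single c 1)) = lin_ext (\<lambda>q. \<Phi> (op q c)) x"
  by (simp add: bilin_def lin_ext_lin_ext)

lemma lin_ext_bilin_split:
  "lin_ext (\<lambda>p. bilin op (F (fst p)) (G (snd p))) (bilin Pair x y) = bilin op (lin_ext F x) (lin_ext G y)"
proof -
  have "lin_ext (\<lambda>p. bilin op (F (fst p)) (G (snd p))) (bilin Pair x y) =
      lin_ext (\<lambda>a. lin_ext (\<lambda>b. bilin op (F a) (G b)) y) x"
    unfolding bilin_def[of Pair] lin_ext_lin_ext by simp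
  also have "\<dots> = lin_ext (\<lambda>a. bilin op (F a) (lin_ext G y)) x"
    by (simp only: bilin_lin_ext_right)
  finally show ?thesis
    by (simp only: bilin_lin_ext_left)
qed

lemma keys_bilin:
  "Poly_Mapping.keys (bilin op x y) \<subseteq> {op a b |a b. a \<in> Poly_Mapping.keys x \<and> b \<in> Poly_Mapping.keys y}"
proof
  fix k assume k: "k \<in> Poly_Mapping.keys (bilin op x y)"
  obtain a where a: "a \<in> Poly_Mapping.keys x"
    and ka: "k \<in> Poly_Mapping.keys (lin_ext (\<lambda>b. Poly_Mapping.single (op a b) (1::complex)) y)"
    using subsetD[OF keys_lin_ext k[unfolded bilin_def]] by blast
  obtain b where "b \<in> Poly_Mapping.keys y" "k \<in> Poly_Mapping.keys (Poly_Mapping.single (op a b) (1::complex))"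
    using subsetD[OF keys_lin_ext ka] by blast
  with a show "k \<in> {op a b |a b. a \<in> Poly_Mapping.keys x \<and> b \<in> Poly_Mapping.keys y}" by auto
qed

lemma bilin_interchange:
  assumes "\<And>a b c d. t (o1 a c) (o2 b d) = o3 (t a b) (t c d)"
  shows "bilin t (bilin o1 a c) (bilin o2 b d) = bilin o3 (bilin t a b) (bilin t c d)"
proof -
  note lin = bilin_lin_ext_left bilin_lin_ext_right
  have single_abcd: "\<And>ka kb kc kd. bilin t (bilin o1 (Poly_Mapping.single ka 1) (Poly_Mapping.single kc 1))
      (bilin o2 (Poly_Mapping.single kb 1) (Poly_Mapping.single kd 1)) =
    bilin o3 (bilin t (Poly_Mapping.single ka 1) (Poly_Mapping.single kb 1))
      (bilin t (Poly_Mapping.single kc 1) (Poly_Mapping.single kd 1))"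
    by (simp add: assms)
  have single_abc: "\<And>ka kb kc. bilin t (bilin o1 (Poly_Mapping.single ka 1) (Poly_Mapping.single kc 1))
      (bilin o2 (Poly_Mapping.single kb 1) d) =
    bilin o3 (bilin t (Poly_Mapping.single ka 1) (Poly_Mapping.single kb 1))
      (bilin t (Poly_Mapping.single kc 1) d)"
    by (rule lin_map_eqI[where x=d]) (simp_all only: single_abcd lin)
  have single_ab: "\<And>ka kb. bilin t (bilin o1 (Poly_Mapping.single ka 1) c) (bilin o2 (Poly_Mapping.single kb 1) d) =
    bilin o3 (bilin t (Poly_Mapping.single ka 1) (Poly_Mapping.single kb 1)) (bilin t c d)"
    by (rule lin_map_eqI[where x=c]) (simp_all only: single_abc lin)
  have single_a: "\<And>ka. bilin t (bilin o1 (Poly_Mapping.single ka 1) c) (bilin o2 b d) =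
    bilin o3 (bilin t (Poly_Mapping.single ka 1) b) (bilin t c d)"
    by (rule lin_map_eqI[where x=b]) (simp_all only: single_ab lin)
  show ?thesis
    by (rule lin_map_eqI[where x=a]) (simp_all only: single_a lin)
qed

definition pair_append :: "mon \<times> mon \<Rightarrow> mon \<times> mon \<Rightarrow> mon \<times> mon" where
  "pair_append p q = (fst p @ fst q, snd p @ snd q)"

lemma pair_append_Pair [simp]: "pair_append (a, b) (c, d) = (a @ c, b @ d)"
  by (simp add: pair_append_def)

lemma hmult_eq_bilin: "hmult = bilin (@)"
  by (intro ext) (simp add: hmult_def bilin_def lin_ext_def scale_pm_sum mult.commute)

lemma tens_eq_bilin: "tens = bilin Pair"
  by (intro ext) (simp add: tens_def bilin_def lin_ext_def scale_pm_sum mult.commute)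

lemma hhmult_eq_bilin: "hhmult = bilin pair_append"
  by (intro ext) (simp add: hhmult_def bilin_def lin_ext_def scale_pm_sum mult.commute pair_append_def)

lemma hmult_assoc: "hmult (hmult x y) z = hmult x (hmult y z)"
  unfolding hmult_eq_bilin by (rule bilin_assoc) simp

lemma hhmult_assoc: "hhmult (hhmult x y) z = hhmult x (hhmult y z)"
  unfolding hhmult_eq_bilin by (rule bilin_assoc) (simp add: pair_append_def)

lemma hmult_hone_left [simp]: "hmult hone x = x"
  by (simp add: hmult_eq_bilin hone_def bilin_single_left)

lemma hmult_hone_right [simp]: "hmult x hone = x"
  by (simp add: hmult_eq_bilin hone_def bilin_def)

lemma hhmult_hhone_left [simp]: "hhmult hhone x = x"
  by (simp add: hhmult_eq_bilin hhone_def bilin_single_left pair_append_def)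

lemma hhmult_hhone_right [simp]: "hhmult x hhone = x"
  by (simp add: hhmult_eq_bilin hhone_def bilin_def pair_append_def)

lemma hmult_zero_left [simp]: "hmult 0 x = 0"
  by (simp add: hmult_eq_bilin)

lemma hmult_zero_right [simp]: "hmult x 0 = 0"
  by (simp add: hmult_eq_bilin)

lemma hprod_Nil [simp]: "hprod [] = hone"
  by (simp add: hprod_def)

lemma hprod_Cons: "hprod (x # xs) = hmult x (hprod xs)"
  by (simp add: hprod_def)

lemma hprod_append: "hprod (xs @ ys) = hmult (hprod xs) (hprod ys)"
  by (induction xs) (auto simp: hprod_def hmult_assoc)

lemma hprod_map_concat: "hprod (map f (concat xss)) = hprod (map (\<lambda>xs. hprod (map f xs)) xss)"
  by (induction xss) (simp_all add: hprod_append hprod_Cons)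

lemma hprod_scale_pm:
  "hprod (map (\<lambda>t. scale_pm (c t) (X t)) xs) = scale_pm (prod_list (map c xs)) (hprod (map X xs))"
  by (induction xs) (simp_all add: hprod_Cons hmult_eq_bilin mult.commute)

lemma hhprod_Nil [simp]: "hhprod [] = hhone"
  by (simp add: hhprod_def)

lemma hhprod_Cons: "hhprod (x # xs) = hhmult x (hhprod xs)"
  by (simp add: hhprod_def)

lemma hhprod_append: "hhprod (xs @ ys) = hhmult (hhprod xs) (hhprod ys)"
  by (induction xs) (auto simp: hhprod_def hhmult_assoc)

lemma tens_hone_hone: "tens hone hone = hhone"
  by (simp add: tens_eq_bilin hone_def hhone_def)

lemma hhmult_tens: "hhmult (tens a b) (tens c d) = tens (hmult a c) (hmult b d)"
  unfolding hhmult_eq_bilin tens_eq_bilin hmult_eq_bilin by (rule bilin_interchange[symmetric]) simp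

lemma hhprod_tens:
  "hhprod (map (\<lambda>k. tens (A k) (B k)) xs) = tens (hprod (map A xs)) (hprod (map B xs))"
  by (induction xs) (simp_all add: hhprod_Cons hprod_Cons hhmult_tens tens_hone_hone)

lemma lookup_hmult_Nil:
  "Poly_Mapping.lookup (hmult x y) [] = Poly_Mapping.lookup x [] * Poly_Mapping.lookup y []"
proof -
  have "Poly_Mapping.lookup (hmult x y) [] =
      (\<Sum>a\<in>Poly_Mapping.keys x. \<Sum>b\<in>Poly_Mapping.keys y.
         if a = [] \<and> b = [] then Poly_Mapping.lookup x a * Poly_Mapping.lookup y b else 0)"
    by (simp add: hmult_def lookup_sum lookup_single when_def)
  also have "\<dots> = (\<Sum>a\<in>Poly_Mapping.keys x. if a = [] then \<Sum>b\<in>Poly_Mapping.keys y.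
         if b = [] then Poly_Mapping.lookup x a * Poly_Mapping.lookup y b else 0 else 0)"
    by (intro sum.cong) auto
  also have "\<dots> = Poly_Mapping.lookup x [] * Poly_Mapping.lookup y []"
    by (simp add: in_keys_iff)
  finally show ?thesis .
qed

lemma Delta_eq_lin_ext: "Delta N = lin_ext (Delta_mon N)"
  by (intro ext) (simp add: Delta_def lin_ext_def hhscale_eq_scale_pm)

lemma Delta_mon_Nil [simp]: "Delta_mon N [] = hhone"
  by (simp add: Delta_mon_def)

lemma Delta_mon_single [simp]: "Delta_mon N [g] = Delta_gen N g"
  by (simp add: Delta_mon_def hhprod_Cons)

lemma Delta_mon_append: "Delta_mon N (a @ b) = hhmult (Delta_mon N a) (Delta_mon N b)"
  by (simp add: Delta_mon_def hhprod_append)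

lemma Delta_mon_Cons: "Delta_mon N (g # m) = bilin pair_append (Delta_gen N g) (Delta_mon N m)"
  by (simp add: Delta_mon_def hhprod_Cons hhmult_eq_bilin)

lemma Delta_hmult: "Delta N (hmult x y) = hhmult (Delta N x) (Delta N y)"
  unfolding Delta_eq_lin_ext hmult_eq_bilin hhmult_eq_bilin
  by (rule lin_ext_bilin) (simp add: Delta_mon_append hhmult_eq_bilin)

lemma Delta_zero [simp]: "Delta N 0 = 0"
  by (simp add: Delta_eq_lin_ext)

lemma Delta_hone [simp]: "Delta N hone = hhone"
  by (simp add: Delta_eq_lin_ext hone_def)

lemma Delta_hprod: "Delta N (hprod xs) = hhprod (map (Delta N) xs)"
  by (induction xs) (simp_all add: hprod_Cons hhprod_Cons Delta_hmult)

section \<open>Blockings and the coproduct of a generator\<close>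

text \<open>A blocking of a word \<open>u\<close> cuts \<open>u\<close> into consecutive nonempty blocks and colors each
  block; the blocking \<open>[(u|C\<^sub>1, v(1)), \<dots>, (u|C\<^sub>q, v(q))]\<close> indexes one summand of the coproduct
  of \<open>Y\<^sub>u\<^sup>i\<close>.\<close>

definition blockings :: "nat \<Rightarrow> nat list \<Rightarrow> (nat list \<times> nat) list set" where
  "blockings N u = {bs. concat (map fst bs) = u \<and> (\<forall>b\<in>set bs. fst b \<noteq> [] \<and> snd b \<in> {1..N})}"

definition block_prod :: "(nat list \<times> nat) list \<Rightarrow> hel" where
  "block_prod bs = hprod (map (\<lambda>b. Y (snd b) (fst b)) bs)"

lemma block_prod_Nil [simp]: "block_prod [] = hone"
  by (simp add: block_prod_def)

lemma block_prod_Cons: "block_prod (b # bs) = hmult (Y (snd b) (fst b)) (block_prod bs)"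
  by (simp add: block_prod_def hprod_Cons)

lemma block_prod_concat: "block_prod (concat bss) = hprod (map block_prod bss)"
  by (induction bss) (simp_all add: block_prod_def hprod_append hprod_Cons)

lemma length_le_length_concat: "\<forall>c\<in>set cs. c \<noteq> [] \<Longrightarrow> length cs \<le> length (concat cs)"
proof (induction cs)
  case (Cons c cs)
  then have "1 \<le> length c" by (simp add: Suc_le_eq)
  with Cons show ?case by simp
qed simp

lemma length_le_length_concat_mem: "x \<in> set xs \<Longrightarrow> length x \<le> length (concat xs)"
  by (induction xs) auto

lemma finite_blockings: "finite (blockings N u)"
proof (rule finite_subset)
  let ?W = "{w. set w \<subseteq> set u \<and> length w \<le> length u}"
  show "blockings N u \<subseteq> {bs. set bs \<subseteq> ?W \<times> {1..N} \<and> length bs \<le> length u}"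
  proof
    fix bs assume "bs \<in> blockings N u"
    then have c: "concat (map fst bs) = u" and ne: "\<forall>b\<in>set bs. fst b \<noteq> [] \<and> snd b \<in> {1..N}"
      by (auto simp: blockings_def)
    have "length bs \<le> length u"
      using length_le_length_concat[of "map fst bs"] ne c by auto
    moreover have "set bs \<subseteq> ?W \<times> {1..N}"
    proof
      fix b assume b: "b \<in> set bs"
      then have "set (fst b) \<subseteq> set u"
        unfolding c[symmetric] by fastforce
      moreover have "length (fst b) \<le> length u"
        using c length_le_length_concat_mem[of "fst b" "map fst bs"] b by auto
      ultimately show "b \<in> ?W \<times> {1..N}" using ne b by (cases b) auto
    qed
    ultimately show "bs \<in> {bs. set bs \<subseteq> ?W \<times> {1..N} \<and> length bs \<le> length u}" by simp
  qed
  show "finite {bs. set bs \<subseteq> ?W \<times> {1..N} \<and> length bs \<le> length u}"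
    by (intro finite_lists_length_le finite_cartesian_product) (simp_all add: finite_lists_length_le)
qed

lemma finite_interval_splits: "finite (interval_splits u)"
proof (rule finite_subset)
  let ?W = "{w. set w \<subseteq> set u \<and> length w \<le> length u}"
  show "interval_splits u \<subseteq> {cs. set cs \<subseteq> ?W \<and> length cs \<le> length u}"
    using length_le_length_concat length_le_length_concat_mem
    by (fastforce simp: interval_splits_def)
  show "finite {cs. set cs \<subseteq> ?W \<and> length cs \<le> length u}"
    by (intro finite_lists_length_le) (simp_all add: finite_lists_length_le)
qed

lemma finite_words: "finite (words N q)"
  by (rule finite_subset[of _ "{v. set v \<subseteq> {1..N} \<and> length v \<le> q}"])
    (auto simp: words_def intro: finite_lists_length_le)

lemma Delta_gen_eq_blockings:
  "Delta_gen N (i, u) = (\<Sum>bs\<in>blockings N u. tens (block_prod bs) (Y i (map snd bs)))"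
proof -
  have "Delta_gen N (i, u) = (\<Sum>(cs, v)\<in>Sigma (interval_splits u) (\<lambda>cs. words N (length cs)).
      tens (hprod (map (\<lambda>k. Y (v ! k) (cs ! k)) [0..<length cs])) (Y i v))"
    unfolding Delta_gen_def by (simp add: sum.Sigma finite_interval_splits finite_words)
  also have "\<dots> = (\<Sum>bs\<in>blockings N u. tens (block_prod bs) (Y i (map snd bs)))"
  proof (rule sum.reindex_bij_witness[where i="\<lambda>bs. (map fst bs, map snd bs)" and j="\<lambda>(cs, v). zip cs v"])
    fix a assume "a \<in> Sigma (interval_splits u) (\<lambda>cs. words N (length cs))"
    then obtain cs v where a: "a = (cs, v)" "cs \<in> interval_splits u" "v \<in> words N (length cs)"
      and l: "length v = length cs"
      by (auto simp: words_def)
    have "map (\<lambda>b. Y (snd b) (fst b)) (zip cs v) = map (\<lambda>k. Y (v ! k) (cs ! k)) [0..<length cs]"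
      using l by (intro nth_equalityI) auto
    then show "tens (block_prod (case a of (cs, v) \<Rightarrow> zip cs v))
        (Y i (map snd (case a of (cs, v) \<Rightarrow> zip cs v))) =
      (case a of (cs, v) \<Rightarrow> tens (hprod (map (\<lambda>k. Y (v ! k) (cs ! k)) [0..<length cs])) (Y i v))"
      using a l by (simp add: block_prod_def)
    show "(case a of (cs, v) \<Rightarrow> zip cs v) \<in> blockings N u"
      using a l
      by (auto simp: blockings_def interval_splits_def words_def dest: set_zip_leftD set_zip_rightD)
    show "(case case a of (cs, v) \<Rightarrow> zip cs v of bs \<Rightarrow> (map fst bs, map snd bs)) = a"
      using a l by simp
  next
    fix b assume "b \<in> blockings N u"
    then show "(map fst b, map snd b) \<in> Sigma (interval_splits u) (\<lambda>cs. words N (length cs))"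
      by (auto simp: blockings_def interval_splits_def words_def)
  qed (simp add: zip_map_fst_snd)
  finally show ?thesis .
qed

lemma Y_singleton: "Y c [j] = (if j = c then hone else 0)"
  by (simp add: Y_def)

lemma Y_long: "2 \<le> length w \<Longrightarrow> Y c w = Poly_Mapping.single [(c, w)] 1"
  by (simp add: Y_def)

lemma word_cases:
  obtains "w = []" | j where "w = [j]" | "2 \<le> length w"
  by (cases w rule: remdups_adj.cases) auto

lemma lookup_Y_Nil: "w \<noteq> [] \<Longrightarrow> Poly_Mapping.lookup (Y c w) [] = (if w = [c] then 1 else 0)"
  by (cases w rule: word_cases) (auto simp: Y_singleton Y_long hone_def lookup_single)

lemma lookup_block_prod_Nil:
  "\<forall>b\<in>set bs. fst b \<noteq> [] \<Longrightarrow>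
   Poly_Mapping.lookup (block_prod bs) [] = (if \<forall>b\<in>set bs. fst b = [snd b] then 1 else 0)"
  by (induction bs) (auto simp: block_prod_Cons lookup_hmult_Nil lookup_Y_Nil hone_def)

lemma blockings_singleton: "blockings N [j] = (\<lambda>d. [([j], d)]) ` {1..N}"
proof (intro equalityI subsetI)
  fix bs assume "bs \<in> blockings N [j]"
  then have c: "concat (map fst bs) = [j]" and ne: "\<forall>b\<in>set bs. fst b \<noteq> [] \<and> snd b \<in> {1..N}"
    by (auto simp: blockings_def)
  then obtain b bs' where bs: "bs = b # bs'" by (cases bs) auto
  with ne have "fst b \<noteq> []" by auto
  with c bs have "fst b = [j]" "concat (map fst bs') = []"
    by (auto simp: append_eq_Cons_conv)
  with ne bs have "fst b = [j]" "bs' = []"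
    by (cases bs'; auto)+
  with bs ne show "bs \<in> (\<lambda>d. [([j], d)]) ` {1..N}" by (cases b) auto
qed (auto simp: blockings_def)

lemma Delta_Y:
  assumes "w \<noteq> []" "set w \<subseteq> {1..N}"
  shows "Delta N (Y c w) = (\<Sum>bs\<in>blockings N w. tens (block_prod bs) (Y c (map snd bs)))"
proof (cases w rule: word_cases)
  case (2 j)
  with assms have j: "j \<in> {1..N}" by auto
  have "(\<Sum>bs\<in>blockings N w. tens (block_prod bs) (Y c (map snd bs))) =
      (\<Sum>d\<in>{1..N}. tens (Y d [j]) (Y c [d]))"
    unfolding 2 blockings_singleton by (subst sum.reindex) (auto simp: inj_on_def block_prod_Cons)
  also have "\<dots> = (\<Sum>d\<in>{1..N}. if d = j then (if j = c then hhone else 0) else 0)"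
    by (rule sum.cong) (auto simp: Y_singleton tens_hone_hone[unfolded tens_eq_bilin] tens_eq_bilin)
  also have "\<dots> = Delta N (Y c w)"
    using j 2 by (simp add: Y_singleton)
  finally show ?thesis ..
qed (use assms in \<open>simp_all add: Y_long Delta_eq_lin_ext Delta_gen_eq_blockings\<close>)

definition choices :: "('b \<Rightarrow> 'a set) \<Rightarrow> 'b list \<Rightarrow> 'a list set" where
  "choices A bs = {xs. list_all2 (\<lambda>x b. x \<in> A b) xs bs}"

lemma choices_Nil [simp]: "choices A [] = {[]}"
  by (auto simp: choices_def)

lemma choices_Cons: "choices A (b # bs) = (\<lambda>(x, xs). x # xs) ` (A b \<times> choices A bs)"
  by (auto simp: choices_def list_all2_Cons2)

lemma mem_choices_iff:
  "xs \<in> choices A bs \<longleftrightarrow> length xs = length bs \<and> (\<forall>k<length bs. xs ! k \<in> A (bs ! k))"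
  by (auto simp: choices_def list_all2_conv_all_nth)

lemma finite_choices: "(\<And>b. b \<in> set bs \<Longrightarrow> finite (A b)) \<Longrightarrow> finite (choices A bs)"
  by (induction bs) (simp_all add: choices_Cons)

lemma foldr_bilin_sum:
  assumes "\<And>b. b \<in> set bs \<Longrightarrow> finite (A b)"
  shows "foldr (bilin op) (map (\<lambda>b. \<Sum>x\<in>A b. F b x) bs) e =
    (\<Sum>xs\<in>choices A bs. foldr (bilin op) (map (\<lambda>(b, x). F b x) (zip bs xs)) e)"
  using assms
proof (induction bs)
  case (Cons b bs)
  let ?P = "\<lambda>xs. foldr (bilin op) (map (\<lambda>(b, x). F b x) (zip bs xs)) e"
  have inj: "inj_on (\<lambda>(x, xs). x # xs) (A b \<times> choices A bs)"
    by (auto simp: inj_on_def)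
  have "foldr (bilin op) (map (\<lambda>b. \<Sum>x\<in>A b. F b x) (b # bs)) e =
      bilin op (\<Sum>x\<in>A b. F b x) (\<Sum>xs\<in>choices A bs. ?P xs)"
    using Cons by simp
  also have "\<dots> = (\<Sum>x\<in>A b. \<Sum>xs\<in>choices A bs. bilin op (F b x) (?P xs))"
    by (simp add: bilin_sum_left bilin_sum_right) (rule sum.swap)
  also have "\<dots> = (\<Sum>(x, xs)\<in>A b \<times> choices A bs. bilin op (F b x) (?P xs))"
    by (rule sum.cartesian_product)
  also have "\<dots> = (\<Sum>xs\<in>choices A (b # bs). foldr (bilin op) (map (\<lambda>(b, x). F b x) (zip (b # bs) xs)) e)"
    unfolding choices_Cons by (subst sum.reindex[OF inj]) (auto intro!: sum.cong)
  finally show ?case .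
qed simp

lemma hprod_sum:
  assumes "\<And>b. b \<in> set bs \<Longrightarrow> finite (A b)"
  shows "hprod (map (\<lambda>b. \<Sum>x\<in>A b. F b x) bs) = (\<Sum>xs\<in>choices A bs. hprod (map (\<lambda>(b, x). F b x) (zip bs xs)))"
  using foldr_bilin_sum[OF assms, where op="(@)" and F=F and e=hone]
  by (simp add: hprod_def hmult_eq_bilin)

lemma hhprod_sum:
  assumes "\<And>b. b \<in> set bs \<Longrightarrow> finite (A b)"
  shows "hhprod (map (\<lambda>b. \<Sum>x\<in>A b. F b x) bs) = (\<Sum>xs\<in>choices A bs. hhprod (map (\<lambda>(b, x). F b x) (zip bs xs)))"
  using foldr_bilin_sum[OF assms, where op=pair_append and F=F and e=hhone]
  by (simp add: hhprod_def hhmult_eq_bilin)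

section \<open>Coassociativity\<close>

fun chop :: "nat list \<Rightarrow> 'a list \<Rightarrow> 'a list list" where
  "chop [] xs = []"
| "chop (n # ns) xs = take n xs # chop ns (drop n xs)"

lemma chop_concat: "chop (map length xss) (concat xss) = xss"
  by (induction xss) auto

lemma concat_chop: "sum_list ns = length xs \<Longrightarrow> concat (chop ns xs) = xs"
  by (induction ns arbitrary: xs) auto

lemma length_chop [simp]: "length (chop ns xs) = length ns"
  by (induction ns arbitrary: xs) auto

lemma map_length_chop: "sum_list ns = length xs \<Longrightarrow> map length (chop ns xs) = ns"
  by (induction ns arbitrary: xs) (auto simp: min_def)

lemma chop_map: "chop ns (map f xs) = map (map f) (chop ns xs)"
  by (induction ns arbitrary: xs) (auto simp: take_map drop_map)

lemma set_chop_subset: "ys \<in> set (chop ns xs) \<Longrightarrow> set ys \<subseteq> set xs"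
  by (induction ns arbitrary: xs) (auto dest: in_set_takeD in_set_dropD)

lemma concat_map_fst_concat: "concat (map fst (concat xss)) = concat (map (\<lambda>xs. concat (map fst xs)) xss)"
  by (induction xss) auto

text \<open>Refining every block of a blocking \<open>bs\<close> of \<open>u\<close> by a blocking of that block yields a
  finer blocking of \<open>u\<close>, together with a blocking of its color word whose blocks are the
  refinements and whose colors are those of \<open>bs\<close>.  This is a bijection; it is the combinatorial
  content of coassociativity.\<close>

definition refine :: "(nat list \<times> nat) list \<times> (nat list \<times> nat) list list
    \<Rightarrow> (nat list \<times> nat) list \<times> (nat list \<times> nat) list" where
  "refine = (\<lambda>(bs, bss). (concat bss, zip (map (map snd) bss) (map snd bs)))"

definition coarsen :: "(nat list \<times> nat) list \<times> (nat list \<times> nat) list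
    \<Rightarrow> (nat list \<times> nat) list \<times> (nat list \<times> nat) list list" where
  "coarsen = (\<lambda>(bs, cs). let bss = chop (map (length \<circ> fst) cs) bs in
      (zip (map (\<lambda>xs. concat (map fst xs)) bss) (map snd cs), bss))"

abbreviation refinements :: "nat \<Rightarrow> nat list \<Rightarrow> ((nat list \<times> nat) list \<times> (nat list \<times> nat) list list) set" where
  "refinements N u \<equiv> Sigma (blockings N u) (choices (\<lambda>b. blockings N (fst b)))"

abbreviation double_blockings :: "nat \<Rightarrow> nat list \<Rightarrow> ((nat list \<times> nat) list \<times> (nat list \<times> nat) list) set" where
  "double_blockings N u \<equiv> Sigma (blockings N u) (\<lambda>bs. blockings N (map snd bs))"

lemma refinement_facts:
  assumes "(bs, bss) \<in> refinements N u"
  shows "length bss = length bs"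
    and "map (\<lambda>xs. concat (map fst xs)) bss = map fst bs"
    and "\<And>k. k < length bs \<Longrightarrow> bss ! k \<noteq> []"
    and "\<And>b. b \<in> set (concat bss) \<Longrightarrow> fst b \<noteq> [] \<and> snd b \<in> {1..N}"
proof -
  have bs: "bs \<in> blockings N u" and bss: "bss \<in> choices (\<lambda>b. blockings N (fst b)) bs"
    using assms by auto
  then show l: "length bss = length bs" by (simp add: mem_choices_iff)
  have k: "concat (map fst (bss ! k)) = fst (bs ! k)" if "k < length bs" for k
    using bss that by (auto simp: mem_choices_iff blockings_def)
  with l show "map (\<lambda>xs. concat (map fst xs)) bss = map fst bs"
    by (intro nth_equalityI) auto
  show "bss ! k \<noteq> []" if "k < length bs" for k
    using k[OF that] bs nth_mem[OF that] by (auto simp: blockings_def)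
  show "fst b \<noteq> [] \<and> snd b \<in> {1..N}" if b: "b \<in> set (concat bss)" for b
  proof -
    obtain xs where "xs \<in> set bss" "b \<in> set xs"
      using b by auto
    moreover from this(1) obtain k where "k < length bs" "bss ! k = xs"
      using l by (auto simp: in_set_conv_nth)
    ultimately show ?thesis
      using bss by (auto simp: mem_choices_iff blockings_def)
  qed
qed

lemma refine_mem: "x \<in> refinements N u \<Longrightarrow> refine x \<in> double_blockings N u"
proof (cases x)
  case (Pair bs bss)
  assume x: "x \<in> refinements N u"
  note facts = refinement_facts[OF x[unfolded Pair]]
  have bs: "bs \<in> blockings N u" using x Pair by simp
  have "concat bss \<in> blockings N u"
    using bs facts(2,4) by (simp add: blockings_def concat_map_fst_concat)
  moreover have "zip (map (map snd) bss) (map snd bs) \<in> blockings N (map snd (concat bss))"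
    using facts(1,3) bs by (auto simp: blockings_def map_concat set_zip)
  ultimately show ?thesis by (simp add: Pair refine_def)
qed

lemma coarsening_facts:
  assumes "(bs, cs) \<in> double_blockings N u"
  defines "bss \<equiv> chop (map (length \<circ> fst) cs) bs"
  shows "concat bss = bs"
    and "length bss = length cs"
    and "map (map snd) bss = map fst cs"
    and "\<And>k. k < length cs \<Longrightarrow> bss ! k \<noteq> []"
    and "\<And>k. k < length cs \<Longrightarrow> set (bss ! k) \<subseteq> set bs"
proof -
  have cs: "concat (map fst cs) = map snd bs" "\<And>c. c \<in> set cs \<Longrightarrow> fst c \<noteq> []"
    using assms(1) by (auto simp: blockings_def)
  have sum: "sum_list (map (length \<circ> fst) cs) = length bs"
    using arg_cong[OF cs(1), of length] by (simp add: length_concat)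
  then show "concat bss = bs" unfolding bss_def by (rule concat_chop)
  show l: "length bss = length cs" by (simp add: bss_def)
  have "map (map snd) bss = chop (map length (map fst cs)) (concat (map fst cs))"
    by (simp add: bss_def chop_map cs(1))
  then show "map (map snd) bss = map fst cs" by (simp only: chop_concat)
  show "bss ! k \<noteq> []" if "k < length cs" for k
  proof -
    have "length (bss ! k) = length (fst (cs ! k))"
      using arg_cong[OF map_length_chop[OF sum], of "\<lambda>xs. xs ! k"] that by (simp add: bss_def)
    with cs(2)[OF nth_mem[OF that]] show ?thesis by auto
  qed
  show "set (bss ! k) \<subseteq> set bs" if k: "k < length cs" for k
    unfolding bss_def by (rule set_chop_subset, rule nth_mem) (simp add: k)
qed

lemma coarsen_mem: "y \<in> double_blockings N u \<Longrightarrow> coarsen y \<in> refinements N u"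
proof (cases y)
  case (Pair bs cs)
  assume y: "y \<in> double_blockings N u"
  let ?bss = "chop (map (length \<circ> fst) cs) bs"
  let ?bs = "zip (map (\<lambda>xs. concat (map fst xs)) ?bss) (map snd cs)"
  note facts = coarsening_facts[OF y[unfolded Pair]]
  have bs: "bs \<in> blockings N u" and cs: "cs \<in> blockings N (map snd bs)"
    using y Pair by auto
  have blocks_ne: "concat (map fst (?bss ! k)) \<noteq> []" if k: "k < length cs" for k
  proof -
    obtain b where "b \<in> set (?bss ! k)"
      using facts(4)[OF k] by (metis list.set_intros(1) neq_Nil_conv)
    with facts(5)[OF k] bs show ?thesis
      by (auto simp: blockings_def)
  qed
  have "?bs \<in> blockings N u"
  proof -
    have "concat (map fst ?bs) = concat (map fst (concat ?bss))"
      using facts(2) by (simp add: concat_map_fst_concat)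
    with bs facts(1) have "concat (map fst ?bs) = u"
      by (simp add: blockings_def)
    moreover have "fst c \<noteq> [] \<and> snd c \<in> {1..N}" if c_mem: "c \<in> set ?bs" for c
    proof -
      obtain k where k: "k < length cs" and c: "c = (concat (map fst (?bss ! k)), snd (cs ! k))"
        using c_mem facts(2) by (auto simp: set_zip)
      show ?thesis
        using blocks_ne[OF k] cs nth_mem[OF k] c by (auto simp: blockings_def)
    qed
    ultimately show ?thesis by (simp add: blockings_def)
  qed
  moreover have "?bss \<in> choices (\<lambda>b. blockings N (fst b)) ?bs"
    using facts(2,5) bs by (auto simp: mem_choices_iff blockings_def)
  ultimately show ?thesis by (simp add: Pair coarsen_def Let_def)
qed

lemma coarsen_refine: "x \<in> refinements N u \<Longrightarrow> coarsen (refine x) = x"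
proof (cases x)
  case (Pair bs bss)
  assume x: "x \<in> refinements N u"
  note facts = refinement_facts[OF x[unfolded Pair]]
  have "map (length \<circ> fst) (zip (map (map snd) bss) (map snd bs)) = map length bss"
    using facts(1) by (intro nth_equalityI) simp_all
  then show ?thesis
    using facts(1,2) by (simp add: Pair refine_def coarsen_def chop_concat zip_map_fst_snd)
qed

lemma refine_coarsen: "y \<in> double_blockings N u \<Longrightarrow> refine (coarsen y) = y"
proof (cases y)
  case (Pair bs cs)
  assume y: "y \<in> double_blockings N u"
  note facts = coarsening_facts[OF y[unfolded Pair]]
  show ?thesis
    using facts(1-3) by (simp add: Pair refine_def coarsen_def Let_def zip_map_fst_snd)
qed

lemma bij_betw_refine: "bij_betw refine (refinements N u) (double_blockings N u)"
proof (rule bij_betw_byWitness[where f'=coarsen])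
  show "\<forall>x\<in>refinements N u. coarsen (refine x) = x" using coarsen_refine by blast
  show "\<forall>y\<in>double_blockings N u. refine (coarsen y) = y" using refine_coarsen by blast
  show "refine ` refinements N u \<subseteq> double_blockings N u" using refine_mem by blast
  show "coarsen ` double_blockings N u \<subseteq> refinements N u" using coarsen_mem by blast
qed

definition triple_append :: "(mon \<times> mon) \<times> mon \<Rightarrow> (mon \<times> mon) \<times> mon \<Rightarrow> (mon \<times> mon) \<times> mon" where
  "triple_append x y = (pair_append (fst x) (fst y), snd x @ snd y)"

definition reassoc :: "mon \<Rightarrow> mon \<times> mon \<Rightarrow> (mon \<times> mon) \<times> mon" where
  "reassoc a q = ((a, fst q), snd q)"

text \<open>\<open>(\<Delta> \<otimes> id) \<circ> \<Delta>\<close> and \<open>(id \<otimes> \<Delta>) \<circ> \<Delta>\<close> on a monomial; \<open>reassoc\<close> identifies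
  \<open>H \<otimes> (H \<otimes> H)\<close> with \<open>(H \<otimes> H) \<otimes> H\<close>.\<close>

definition Delta_Delta_id :: "nat \<Rightarrow> mon \<Rightarrow> ((mon \<times> mon) \<times> mon) \<Rightarrow>\<^sub>0 complex" where
  "Delta_Delta_id N m =
    lin_ext (\<lambda>p. bilin Pair (Delta_mon N (fst p)) (Poly_Mapping.single (snd p) 1)) (Delta_mon N m)"

definition Delta_id_Delta :: "nat \<Rightarrow> mon \<Rightarrow> ((mon \<times> mon) \<times> mon) \<Rightarrow>\<^sub>0 complex" where
  "Delta_id_Delta N m =
    lin_ext (\<lambda>p. bilin reassoc (Poly_Mapping.single (fst p) 1) (Delta_mon N (snd p))) (Delta_mon N m)"

lemma Delta_Delta_id_Nil: "Delta_Delta_id N [] = Poly_Mapping.single (([], []), []) 1"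
  by (simp add: Delta_Delta_id_def hhone_def)

lemma Delta_id_Delta_Nil: "Delta_id_Delta N [] = Poly_Mapping.single (([], []), []) 1"
  by (simp add: Delta_id_Delta_def hhone_def reassoc_def)

lemma single_append: "Poly_Mapping.single (a @ b) (1::complex) =
    bilin (@) (Poly_Mapping.single a 1) (Poly_Mapping.single b 1)"
  by simp

lemma Delta_Delta_id_append:
  "Delta_Delta_id N (a @ b) = bilin triple_append (Delta_Delta_id N a) (Delta_Delta_id N b)"
  unfolding Delta_Delta_id_def Delta_mon_append hhmult_eq_bilin
proof (rule lin_ext_bilin)
  fix p q :: "mon \<times> mon"
  show "bilin Pair (Delta_mon N (fst (pair_append p q))) (Poly_Mapping.single (snd (pair_append p q)) 1) =
    bilin triple_append (bilin Pair (Delta_mon N (fst p)) (Poly_Mapping.single (snd p) 1))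
      (bilin Pair (Delta_mon N (fst q)) (Poly_Mapping.single (snd q) 1))"
    unfolding pair_append_def fst_conv snd_conv Delta_mon_append hhmult_eq_bilin single_append
    by (rule bilin_interchange) (simp add: triple_append_def pair_append_def)
qed

lemma Delta_id_Delta_append:
  "Delta_id_Delta N (a @ b) = bilin triple_append (Delta_id_Delta N a) (Delta_id_Delta N b)"
  unfolding Delta_id_Delta_def Delta_mon_append hhmult_eq_bilin
proof (rule lin_ext_bilin)
  fix p q :: "mon \<times> mon"
  show "bilin reassoc (Poly_Mapping.single (fst (pair_append p q)) 1) (Delta_mon N (snd (pair_append p q))) =
    bilin triple_append (bilin reassoc (Poly_Mapping.single (fst p) 1) (Delta_mon N (snd p)))
      (bilin reassoc (Poly_Mapping.single (fst q) 1) (Delta_mon N (snd q)))"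
    unfolding pair_append_def fst_conv snd_conv Delta_mon_append hhmult_eq_bilin single_append
    by (rule bilin_interchange) (simp add: triple_append_def reassoc_def pair_append_def)
qed

lemma Delta_block_prod:
  assumes "bs \<in> blockings N u" "set u \<subseteq> {1..N}"
  shows "Delta N (block_prod bs) = (\<Sum>bss\<in>choices (\<lambda>b. blockings N (fst b)) bs.
     tens (block_prod (concat bss)) (block_prod (zip (map (map snd) bss) (map snd bs))))"
proof -
  have bs: "fst b \<noteq> [] \<and> set (fst b) \<subseteq> {1..N}" if b: "b \<in> set bs" for b
  proof -
    have "fst b \<noteq> [] \<and> set (fst b) \<subseteq> set u"
      using assms(1) b by (auto simp: blockings_def)
    with assms(2) show ?thesis by blast
  qed
  have "Delta N (block_prod bs) = hhprod (map (\<lambda>b. Delta N (Y (snd b) (fst b))) bs)"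
    by (simp add: block_prod_def Delta_hprod comp_def)
  also have "\<dots> = hhprod (map (\<lambda>b. \<Sum>cs\<in>blockings N (fst b).
      tens (block_prod cs) (Y (snd b) (map snd cs))) bs)"
    using bs by (simp add: Delta_Y cong: map_cong)
  also have "\<dots> = (\<Sum>bss\<in>choices (\<lambda>b. blockings N (fst b)) bs.
      hhprod (map (\<lambda>(b, cs). tens (block_prod cs) (Y (snd b) (map snd cs))) (zip bs bss)))"
    by (rule hhprod_sum) (rule finite_blockings)
  also have "\<dots> = (\<Sum>bss\<in>choices (\<lambda>b. blockings N (fst b)) bs.
      tens (block_prod (concat bss)) (block_prod (zip (map (map snd) bss) (map snd bs))))"
  proof (rule sum.cong[OF refl])
    fix bss assume "bss \<in> choices (\<lambda>b. blockings N (fst b)) bs"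
    then have l: "length bss = length bs" by (simp add: mem_choices_iff)
    have "hhprod (map (\<lambda>(b, cs). tens (block_prod cs) (Y (snd b) (map snd cs))) (zip bs bss)) =
       tens (hprod (map (block_prod \<circ> snd) (zip bs bss)))
         (hprod (map (\<lambda>p. Y (snd (fst p)) (map snd (snd p))) (zip bs bss)))"
      unfolding split_def comp_def by (rule hhprod_tens)
    also have "map (block_prod \<circ> snd) (zip bs bss) = map block_prod bss"
      by (metis l map_map map_snd_zip)
    also have "map (\<lambda>p. Y (snd (fst p)) (map snd (snd p))) (zip bs bss) =
        map (\<lambda>b. Y (snd b) (fst b)) (zip (map (map snd) bss) (map snd bs))"
      using l by (intro nth_equalityI) simp_all
    finally show "hhprod (map (\<lambda>(b, cs). tens (block_prod cs) (Y (snd b) (map snd cs))) (zip bs bss)) =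
       tens (block_prod (concat bss)) (block_prod (zip (map (map snd) bss) (map snd bs)))"
      unfolding block_prod_concat block_prod_def[of "zip _ _"] .
  qed
  finally show ?thesis .
qed

lemma Delta_Delta_id_gen:
  assumes "set u \<subseteq> {1..N}"
  shows "Delta_Delta_id N [(i, u)] = (\<Sum>(bs, bss)\<in>refinements N u. bilin Pair
      (tens (block_prod (concat bss)) (block_prod (zip (map (map snd) bss) (map snd bs))))
      (Y i (map snd bs)))"
proof -
  have "Delta_Delta_id N [(i, u)] = (\<Sum>bs\<in>blockings N u. bilin Pair (Delta N (block_prod bs)) (Y i (map snd bs)))"
    unfolding Delta_Delta_id_def Delta_mon_single Delta_gen_eq_blockings lin_ext_sum tens_eq_bilin
    by (simp add: lin_ext_bilin_split[where F="Delta_mon N" and G="\<lambda>c. Poly_Mapping.single c 1"]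
        Delta_eq_lin_ext)
  also have "\<dots> = (\<Sum>bs\<in>blockings N u. \<Sum>bss\<in>choices (\<lambda>b. blockings N (fst b)) bs. bilin Pair
      (tens (block_prod (concat bss)) (block_prod (zip (map (map snd) bss) (map snd bs))))
      (Y i (map snd bs)))"
    using assms by (intro sum.cong refl) (simp add: Delta_block_prod bilin_sum_left)
  also have "\<dots> = (\<Sum>(bs, bss)\<in>refinements N u. bilin Pair
      (tens (block_prod (concat bss)) (block_prod (zip (map (map snd) bss) (map snd bs))))
      (Y i (map snd bs)))"
    by (rule sum.Sigma) (auto intro: finite_blockings finite_choices)
  finally show ?thesis .
qed

lemma Delta_id_Delta_gen:
  assumes "set u \<subseteq> {1..N}" "u \<noteq> []"
  shows "Delta_id_Delta N [(i, u)] = (\<Sum>(bs, cs)\<in>double_blockings N u.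
      bilin Pair (tens (block_prod bs) (block_prod cs)) (Y i (map snd cs)))"
proof -
  have "Delta_id_Delta N [(i, u)] =
      (\<Sum>bs\<in>blockings N u. bilin reassoc (block_prod bs) (Delta N (Y i (map snd bs))))"
    unfolding Delta_id_Delta_def Delta_mon_single Delta_gen_eq_blockings lin_ext_sum tens_eq_bilin
    by (simp add: lin_ext_bilin_split[where G="Delta_mon N" and F="\<lambda>c. Poly_Mapping.single c 1"]
        Delta_eq_lin_ext)
  also have "\<dots> = (\<Sum>bs\<in>blockings N u. \<Sum>cs\<in>blockings N (map snd bs).
      bilin Pair (tens (block_prod bs) (block_prod cs)) (Y i (map snd cs)))"
  proof (rule sum.cong[OF refl])
    fix bs assume bs: "bs \<in> blockings N u"
    then have "map snd bs \<noteq> []" "set (map snd bs) \<subseteq> {1..N}"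
      using assms(2) by (auto simp: blockings_def)
    moreover have "bilin reassoc (block_prod bs) (tens C D) = bilin Pair (tens (block_prod bs) C) D" for C D
      unfolding tens_eq_bilin by (rule bilin_assoc[symmetric]) (simp add: reassoc_def)
    ultimately show "bilin reassoc (block_prod bs) (Delta N (Y i (map snd bs))) =
      (\<Sum>cs\<in>blockings N (map snd bs). bilin Pair (tens (block_prod bs) (block_prod cs)) (Y i (map snd cs)))"
      by (simp add: Delta_Y bilin_sum_right)
  qed
  also have "\<dots> = (\<Sum>(bs, cs)\<in>double_blockings N u.
      bilin Pair (tens (block_prod bs) (block_prod cs)) (Y i (map snd cs)))"
    by (rule sum.Sigma) (auto intro: finite_blockings)
  finally show ?thesis .
qed

lemma coassoc_gen:
  assumes "set u \<subseteq> {1..N}" "u \<noteq> []"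
  shows "Delta_Delta_id N [(i, u)] = Delta_id_Delta N [(i, u)]"
proof -
  define G where "G bs cs = bilin Pair (tens (block_prod bs) (block_prod cs)) (Y i (map snd cs))" for bs cs
  have "(\<Sum>(bs, cs)\<in>double_blockings N u. G bs cs) = (\<Sum>x\<in>refinements N u. case_prod G (refine x))"
    by (rule sum.reindex_bij_betw[OF bij_betw_refine, symmetric])
  also have "\<dots> = (\<Sum>(bs, bss)\<in>refinements N u. bilin Pair
      (tens (block_prod (concat bss)) (block_prod (zip (map (map snd) bss) (map snd bs))))
      (Y i (map snd bs)))"
    by (rule sum.cong[OF refl]) (auto simp: G_def refine_def mem_choices_iff)
  finally show ?thesis
    unfolding Delta_Delta_id_gen[OF assms(1)] Delta_id_Delta_gen[OF assms] G_def by simp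
qed

lemma coassoc:
  assumes "valid_mon N m"
  shows "Delta_Delta_id N m = Delta_id_Delta N m"
  using assms
proof (induction m)
  case Nil
  then show ?case by (simp add: Delta_Delta_id_Nil Delta_id_Delta_Nil)
next
  case (Cons g m)
  obtain i u where g: "g = (i, u)" by (cases g)
  then have "set u \<subseteq> {1..N}" "u \<noteq> []"
    using Cons.prems by (auto simp: valid_mon_def valid_gen_def)
  with Cons g show ?case
    using Delta_Delta_id_append[of N "[g]" m] Delta_id_Delta_append[of N "[g]" m]
    by (simp add: coassoc_gen valid_mon_def)
qed

definition eps_id :: "mon \<times> mon \<Rightarrow> hel" where
  "eps_id p = (if fst p = [] then Poly_Mapping.single (snd p) 1 else 0)"

definition id_eps :: "mon \<times> mon \<Rightarrow> hel" where
  "id_eps p = (if snd p = [] then Poly_Mapping.single (fst p) 1 else 0)"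

lemma eps_id_pair_append: "eps_id (pair_append p q) = bilin (@) (eps_id p) (eps_id q)"
  by (simp add: eps_id_def pair_append_def)

lemma id_eps_pair_append: "id_eps (pair_append p q) = bilin (@) (id_eps p) (id_eps q)"
  by (simp add: id_eps_def pair_append_def)

lemma lin_ext_eps_id_tens: "lin_ext eps_id (tens x y) = scale_pm (Poly_Mapping.lookup x []) y"
proof -
  have "lin_ext eps_id (tens x y) = lin_ext (\<lambda>a. lin_ext (\<lambda>b. eps_id (a, b)) y) x"
    unfolding tens_eq_bilin bilin_def lin_ext_lin_ext by simp
  also have "\<dots> = lin_ext (\<lambda>a. if a = [] then y else 0) x"
    by (rule lin_ext_cong) (simp add: eps_id_def)
  finally show ?thesis by (simp add: lin_ext_delta)
qed

lemma lin_ext_id_eps_tens: "lin_ext id_eps (tens x y) = scale_pm (Poly_Mapping.lookup y []) x"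
proof -
  have "lin_ext id_eps (tens x y) = lin_ext (\<lambda>a. lin_ext (\<lambda>b. id_eps (a, b)) y) x"
    unfolding tens_eq_bilin bilin_def lin_ext_lin_ext by simp
  also have "\<dots> = lin_ext (\<lambda>a. Poly_Mapping.single a (Poly_Mapping.lookup y [])) x"
    by (rule lin_ext_cong) (simp add: id_eps_def lin_ext_delta)
  finally show ?thesis by (simp add: lin_ext_single_scaled)
qed

lemma all_blocks_singleton_iff:
  assumes "bs \<in> blockings N u"
  shows "(\<forall>b\<in>set bs. fst b = [snd b]) \<longleftrightarrow> bs = map (\<lambda>x. ([x], x)) u"
proof
  assume h: "\<forall>b\<in>set bs. fst b = [snd b]"
  then have "bs = map (\<lambda>b. ([snd b], snd b)) bs"
    by (induction bs) (auto simp: prod_eq_iff)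
  moreover from h have "concat (map fst bs) = map snd bs"
    by (induction bs) auto
  with assms have "u = map snd bs"
    by (simp add: blockings_def)
  ultimately show "bs = map (\<lambda>x. ([x], x)) u"
    by (simp add: comp_def)
qed auto

lemma eps_id_Delta_gen:
  assumes "valid_gen N (i, u)"
  shows "lin_ext eps_id (Delta_gen N (i, u)) = Poly_Mapping.single [(i, u)] 1"
proof -
  have u: "set u \<subseteq> {1..N}" "2 \<le> length u" using assms by (auto simp: valid_gen_def)
  let ?b0 = "map (\<lambda>x. ([x], x)) u"
  have "lin_ext eps_id (Delta_gen N (i, u)) =
      (\<Sum>bs\<in>blockings N u. scale_pm (Poly_Mapping.lookup (block_prod bs) []) (Y i (map snd bs)))"
    by (simp add: Delta_gen_eq_blockings lin_ext_eps_id_tens)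
  also have "\<dots> = (\<Sum>bs\<in>blockings N u. if bs = ?b0 then Y i u else 0)"
  proof (rule sum.cong[OF refl])
    fix bs assume bs: "bs \<in> blockings N u"
    then have "\<forall>b\<in>set bs. fst b \<noteq> []" by (simp add: blockings_def)
    with bs show "scale_pm (Poly_Mapping.lookup (block_prod bs) []) (Y i (map snd bs)) =
        (if bs = ?b0 then Y i u else 0)"
      by (simp add: lookup_block_prod_Nil all_blocks_singleton_iff comp_def)
  qed
  also have "\<dots> = Y i u"
  proof -
    have "?b0 \<in> blockings N u" using u by (auto simp: blockings_def comp_def)
    then show ?thesis by (simp add: finite_blockings)
  qed
  finally show ?thesis using u by (simp add: Y_long)
qed

lemma id_eps_Delta_gen:
  assumes "valid_gen N (i, u)"
  shows "lin_ext id_eps (Delta_gen N (i, u)) = Poly_Mapping.single [(i, u)] 1"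
proof -
  have u: "set u \<subseteq> {1..N}" "2 \<le> length u" "i \<in> {1..N}" using assms by (auto simp: valid_gen_def)
  have "lin_ext id_eps (Delta_gen N (i, u)) =
      (\<Sum>bs\<in>blockings N u. scale_pm (Poly_Mapping.lookup (Y i (map snd bs)) []) (block_prod bs))"
    by (simp add: Delta_gen_eq_blockings lin_ext_id_eps_tens)
  also have "\<dots> = (\<Sum>bs\<in>blockings N u. if bs = [(u, i)] then Y i u else 0)"
  proof (rule sum.cong[OF refl])
    fix bs assume "bs \<in> blockings N u"
    then have c: "concat (map fst bs) = u" by (simp add: blockings_def)
    with u have "bs \<noteq> []" by auto
    moreover have "map snd bs = [i] \<longleftrightarrow> bs = [(u, i)]"
      using c by (cases bs) auto
    ultimately show "scale_pm (Poly_Mapping.lookup (Y i (map snd bs)) []) (block_prod bs) =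
        (if bs = [(u, i)] then Y i u else 0)"
      by (auto simp: lookup_Y_Nil block_prod_Cons)
  qed
  also have "\<dots> = Y i u"
  proof -
    have "[(u, i)] \<in> blockings N u" using u by (auto simp: blockings_def)
    then show ?thesis by (simp add: finite_blockings)
  qed
  finally show ?thesis using u by (simp add: Y_long)
qed

lemma eps_id_Delta_mon: "valid_mon N m \<Longrightarrow> lin_ext eps_id (Delta_mon N m) = Poly_Mapping.single m 1"
proof (induction m)
  case (Cons g m)
  have "lin_ext eps_id (Delta_mon N (g # m)) =
      bilin (@) (lin_ext eps_id (Delta_gen N g)) (lin_ext eps_id (Delta_mon N m))"
    unfolding Delta_mon_Cons by (rule lin_ext_bilin) (rule eps_id_pair_append)
  moreover have "lin_ext eps_id (Delta_gen N g) = Poly_Mapping.single [g] 1"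
    using Cons.prems eps_id_Delta_gen[of N "fst g" "snd g"] by (simp add: valid_mon_def)
  ultimately show ?case
    using Cons by (simp add: valid_mon_def)
qed (simp add: hhone_def eps_id_def)

lemma id_eps_Delta_mon: "valid_mon N m \<Longrightarrow> lin_ext id_eps (Delta_mon N m) = Poly_Mapping.single m 1"
proof (induction m)
  case (Cons g m)
  have "lin_ext id_eps (Delta_mon N (g # m)) =
      bilin (@) (lin_ext id_eps (Delta_gen N g)) (lin_ext id_eps (Delta_mon N m))"
    unfolding Delta_mon_Cons by (rule lin_ext_bilin) (rule id_eps_pair_append)
  moreover have "lin_ext id_eps (Delta_gen N g) = Poly_Mapping.single [g] 1"
    using Cons.prems id_eps_Delta_gen[of N "fst g" "snd g"] by (simp add: valid_mon_def)
  ultimately show ?case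
    using Cons by (simp add: valid_mon_def)
qed (simp add: hhone_def id_eps_def)

definition deg :: "mon \<Rightarrow> nat" where
  "deg m = sum_list (map (\<lambda>g. length (snd g) - 1) m)"

lemma deg_Nil [simp]: "deg [] = 0"
  by (simp add: deg_def)

lemma deg_Cons [simp]: "deg (g # m) = (length (snd g) - 1) + deg m"
  by (simp add: deg_def)

lemma deg_append [simp]: "deg (a @ b) = deg a + deg b"
  by (simp add: deg_def)

lemma deg_pos: "valid_mon N m \<Longrightarrow> m \<noteq> [] \<Longrightarrow> 1 \<le> deg m"
  by (cases m) (auto simp: valid_mon_def valid_gen_def)

lemma keys_hmult:
  "x \<in> Poly_Mapping.keys (hmult a b) \<Longrightarrow>
    \<exists>y z. y \<in> Poly_Mapping.keys a \<and> z \<in> Poly_Mapping.keys b \<and> x = y @ z"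
  using keys_bilin[of "(@)" a b] unfolding hmult_eq_bilin by blast

lemma keys_tens:
  "p \<in> Poly_Mapping.keys (tens a b) \<Longrightarrow> fst p \<in> Poly_Mapping.keys a \<and> snd p \<in> Poly_Mapping.keys b"
  using keys_bilin[of Pair a b] unfolding tens_eq_bilin by auto

lemma keys_Y:
  assumes "c \<in> {1..N}" "w \<noteq> []" "set w \<subseteq> {1..N}" "x \<in> Poly_Mapping.keys (Y c w)"
  shows "valid_mon N x \<and> deg x + 1 = length w"
proof (cases w rule: word_cases)
  case (2 j)
  then have "x = []" using assms(4) by (auto simp: Y_singleton hone_def split: if_splits)
  then show ?thesis using 2 by (simp add: valid_mon_def)
next
  case 3
  then have "x = [(c, w)]" using assms(4) by (simp add: Y_long)
  then show ?thesis using 3 assms by (simp add: valid_mon_def valid_gen_def)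
qed (use assms in simp)

lemma keys_block_prod:
  assumes "\<forall>b\<in>set bs. fst b \<noteq> [] \<and> set (fst b) \<subseteq> {1..N} \<and> snd b \<in> {1..N}"
    and "x \<in> Poly_Mapping.keys (block_prod bs)"
  shows "valid_mon N x \<and> deg x + length bs = length (concat (map fst bs))"
  using assms
proof (induction bs arbitrary: x)
  case Nil
  then show ?case by (simp add: hone_def valid_mon_def)
next
  case (Cons b bs)
  from Cons.prems(2) obtain y z where y: "y \<in> Poly_Mapping.keys (Y (snd b) (fst b))"
    and z: "z \<in> Poly_Mapping.keys (block_prod bs)" and x: "x = y @ z"
    by (auto simp: block_prod_Cons dest: keys_hmult)
  have "valid_mon N y \<and> deg y + 1 = length (fst b)"
    using Cons.prems(1) y by (intro keys_Y) auto
  moreover have "valid_mon N z \<and> deg z + length bs = length (concat (map fst bs))"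
    using Cons.prems(1) z by (intro Cons.IH) auto
  ultimately show ?case
    using x by (auto simp: valid_mon_def)
qed

lemma keys_Delta_gen:
  assumes "valid_gen N (i, u)" "p \<in> Poly_Mapping.keys (Delta_gen N (i, u))"
  shows "valid_mon N (fst p) \<and> valid_mon N (snd p) \<and> deg (fst p) + deg (snd p) + 1 = length u"
proof -
  have u: "set u \<subseteq> {1..N}" "2 \<le> length u" "i \<in> {1..N}"
    using assms by (auto simp: valid_gen_def)
  obtain bs where bs: "bs \<in> blockings N u"
    and p: "p \<in> Poly_Mapping.keys (tens (block_prod bs) (Y i (map snd bs)))"
    using subsetD[OF keys_sum_subset assms(2)[unfolded Delta_gen_eq_blockings]] by blast
  have bsu: "concat (map fst bs) = u" and bsv: "\<forall>b\<in>set bs. fst b \<noteq> [] \<and> snd b \<in> {1..N}"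
    using bs by (auto simp: blockings_def)
  have blocks: "\<forall>b\<in>set bs. fst b \<noteq> [] \<and> set (fst b) \<subseteq> {1..N} \<and> snd b \<in> {1..N}"
  proof
    fix b assume b: "b \<in> set bs"
    have "set (fst b) \<subseteq> set u" using b bsu by auto
    with bsv b u(1) show "fst b \<noteq> [] \<and> set (fst b) \<subseteq> {1..N} \<and> snd b \<in> {1..N}" by auto
  qed
  have colors: "map snd bs \<noteq> []" "set (map snd bs) \<subseteq> {1..N}"
    using bsu bsv u(2) by auto
  note pk = keys_tens[OF p]
  have "valid_mon N (fst p) \<and> deg (fst p) + length bs = length u"
    using keys_block_prod[OF blocks conjunct1[OF pk]] bsu by simp
  moreover have "valid_mon N (snd p) \<and> deg (snd p) + 1 = length bs"
    using keys_Y[OF u(3) colors conjunct2[OF pk]] by simp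
  ultimately show ?thesis by auto
qed

lemma keys_Delta_mon:
  assumes "valid_mon N m" "p \<in> Poly_Mapping.keys (Delta_mon N m)"
  shows "valid_mon N (fst p) \<and> valid_mon N (snd p) \<and> deg (fst p) + deg (snd p) = deg m"
  using assms
proof (induction m arbitrary: p)
  case Nil
  then show ?case by (simp add: hhone_def valid_mon_def)
next
  case (Cons g m)
  obtain q r where q: "q \<in> Poly_Mapping.keys (Delta_gen N g)"
    and r: "r \<in> Poly_Mapping.keys (Delta_mon N m)" and p: "p = pair_append q r"
    using Cons.prems(2) keys_bilin[of pair_append "Delta_gen N g" "Delta_mon N m"]
    by (auto simp: Delta_mon_Cons)
  have "valid_gen N g" "valid_mon N m"
    using Cons.prems by (auto simp: valid_mon_def)
  then have "valid_mon N (fst q) \<and> valid_mon N (snd q) \<and> deg (fst q) + deg (snd q) + 1 = length (snd g)"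
    and "valid_mon N (fst r) \<and> valid_mon N (snd r) \<and> deg (fst r) + deg (snd r) = deg m"
    using keys_Delta_gen[of N "fst g" "snd g" q] q Cons.IH[OF _ r] by simp_all
  with p show ?case
    by (auto simp: pair_append_def valid_mon_def)
qed

lemma keys_Delta_mon_deg_less:
  assumes "valid_mon N m" "p \<in> Poly_Mapping.keys (Delta_mon N m)" "fst p \<noteq> []"
  shows "valid_mon N (snd p) \<and> deg (snd p) < deg m"
  using keys_Delta_mon[OF assms(1,2)] deg_pos[of N "fst p"] assms(3) by auto

section \<open>Convolution\<close>

definition conv :: "nat \<Rightarrow> (mon \<Rightarrow> hel) \<Rightarrow> (mon \<Rightarrow> hel) \<Rightarrow> mon \<Rightarrow> hel" where
  "conv N f g m = lin_ext (\<lambda>p. hmult (f (fst p)) (g (snd p))) (Delta_mon N m)"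

definition eta_eps :: "mon \<Rightarrow> hel" where
  "eta_eps m = (if m = [] then hone else 0)"

definition id_mon :: "mon \<Rightarrow> hel" where
  "id_mon m = Poly_Mapping.single m 1"

lemma conv_cong:
  assumes "\<And>x. valid_mon N x \<Longrightarrow> f x = f' x" "\<And>x. valid_mon N x \<Longrightarrow> g x = g' x" "valid_mon N m"
  shows "conv N f g m = conv N f' g' m"
  unfolding conv_def by (rule lin_ext_cong) (use assms keys_Delta_mon[OF assms(3)] in auto)

lemma conv_assoc:
  assumes "valid_mon N m"
  shows "conv N (conv N f g) h m = conv N f (conv N g h) m"
proof -
  define \<Phi> where "\<Phi> x = hmult (hmult (f (fst (fst x))) (g (snd (fst x)))) (h (snd x))" for x
  have "conv N (conv N f g) h m = lin_ext \<Phi> (Delta_Delta_id N m)"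
    unfolding conv_def Delta_Delta_id_def lin_ext_lin_ext lin_ext_bilin_single_right
    by (rule lin_ext_cong) (simp add: \<Phi>_def hmult_eq_bilin bilin_lin_ext_left)
  moreover have "conv N f (conv N g h) m = lin_ext \<Phi> (Delta_id_Delta N m)"
    unfolding conv_def Delta_id_Delta_def lin_ext_lin_ext lin_ext_bilin_single_left
    by (rule lin_ext_cong)
      (simp add: \<Phi>_def reassoc_def bilin_lin_ext_right hmult_assoc[unfolded hmult_eq_bilin] hmult_eq_bilin)
  ultimately show ?thesis
    using coassoc[OF assms] by simp
qed

lemma conv_eta_eps_left:
  assumes "valid_mon N m"
  shows "conv N eta_eps f m = f m"
proof -
  have "conv N eta_eps f m = lin_ext (\<lambda>p. lin_ext f (eps_id p)) (Delta_mon N m)"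
    unfolding conv_def by (rule lin_ext_cong) (simp add: eta_eps_def eps_id_def)
  also have "\<dots> = lin_ext f (lin_ext eps_id (Delta_mon N m))"
    by (simp add: lin_ext_lin_ext)
  finally show ?thesis
    using eps_id_Delta_mon[OF assms] by simp
qed

lemma conv_eta_eps_right:
  assumes "valid_mon N m"
  shows "conv N f eta_eps m = f m"
proof -
  have "conv N f eta_eps m = lin_ext (\<lambda>p. lin_ext f (id_eps p)) (Delta_mon N m)"
    unfolding conv_def by (rule lin_ext_cong) (simp add: eta_eps_def id_eps_def)
  also have "\<dots> = lin_ext f (lin_ext id_eps (Delta_mon N m))"
    by (simp add: lin_ext_lin_ext)
  finally show ?thesis
    using id_eps_Delta_mon[OF assms] by simp
qed

text \<open>A right convolution inverse of the identity, from the recursion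
  \<open>R m = \<eta>\<epsilon> m - \<Sum> a \<cdot> R b\<close> over the terms \<open>a \<otimes> b\<close> of \<open>\<Delta> m\<close> with \<open>a \<noteq> 1\<close>.  Since \<open>deg b < deg m\<close>
  in those terms, \<open>deg m + 1\<close> rounds of the recursion already give the final value.\<close>

primrec rinv_iter :: "nat \<Rightarrow> nat \<Rightarrow> mon \<Rightarrow> hel" where
  "rinv_iter N 0 m = 0"
| "rinv_iter N (Suc n) m = eta_eps m - lin_ext (\<lambda>p. if fst p = [] then 0
      else hmult (Poly_Mapping.single (fst p) 1) (rinv_iter N n (snd p))) (Delta_mon N m)"

definition rinv :: "nat \<Rightarrow> mon \<Rightarrow> hel" where
  "rinv N m = rinv_iter N (Suc (deg m)) m"

lemma rinv_iter_eq_rinv: "valid_mon N m \<Longrightarrow> deg m < n \<Longrightarrow> rinv_iter N n m = rinv N m"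
proof (induction n arbitrary: m rule: less_induct)
  case (less n)
  then obtain n' where n: "n = Suc n'" by (cases n) auto
  have "(if fst p = [] then 0 else hmult (Poly_Mapping.single (fst p) 1) (rinv_iter N n' (snd p))) =
      (if fst p = [] then 0 else hmult (Poly_Mapping.single (fst p) 1) (rinv_iter N (deg m) (snd p)))"
    if p: "p \<in> Poly_Mapping.keys (Delta_mon N m)" for p
  proof (cases "fst p = []")
    case False
    then have "valid_mon N (snd p)" "deg (snd p) < deg m"
      using keys_Delta_mon_deg_less[OF less.prems(1) p] by auto
    moreover from this less.prems n have "rinv_iter N n' (snd p) = rinv N (snd p)"
      by (intro less.IH) auto
    moreover from calculation less.prems n have "rinv_iter N (deg m) (snd p) = rinv N (snd p)"
      by (intro less.IH) auto
    ultimately show ?thesis by simp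
  qed simp
  then have "rinv_iter N n m = rinv_iter N (Suc (deg m)) m"
    unfolding n rinv_iter.simps by (subst lin_ext_cong) auto
  then show ?case by (simp add: rinv_def)
qed

lemma conv_id_rinv:
  assumes "valid_mon N m"
  shows "conv N id_mon (rinv N) m = eta_eps m"
proof -
  let ?G = "\<lambda>p. if fst p = [] then 0
    else hmult (Poly_Mapping.single (fst p) 1) (rinv_iter N (deg m) (snd p))"
  have "conv N id_mon (rinv N) m = lin_ext (\<lambda>p. lin_ext (rinv N) (eps_id p) + ?G p) (Delta_mon N m)"
    unfolding conv_def id_mon_def
  proof (rule lin_ext_cong)
    fix p assume p: "p \<in> Poly_Mapping.keys (Delta_mon N m)"
    show "hmult (Poly_Mapping.single (fst p) 1) (rinv N (snd p)) = lin_ext (rinv N) (eps_id p) + ?G p"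
    proof (cases "fst p = []")
      case True
      then show ?thesis by (simp add: eps_id_def hone_def[symmetric])
    next
      case False
      then have "rinv_iter N (deg m) (snd p) = rinv N (snd p)"
        using keys_Delta_mon_deg_less[OF assms p] by (intro rinv_iter_eq_rinv) auto
      with False show ?thesis by (simp add: eps_id_def)
    qed
  qed
  also have "\<dots> = lin_ext (rinv N) (lin_ext eps_id (Delta_mon N m)) + lin_ext ?G (Delta_mon N m)"
    by (simp add: lin_ext_fun_add lin_ext_lin_ext)
  also have "\<dots> = rinv N m + (eta_eps m - rinv N m)"
    using eps_id_Delta_mon[OF assms] by (simp add: rinv_def)
  finally show ?thesis by simp
qed

lemma left_inverse_unique:
  assumes "\<And>x. valid_mon N x \<Longrightarrow> conv N s id_mon x = eta_eps x" "valid_mon N m"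
  shows "s m = rinv N m"
proof -
  have "s m = conv N s eta_eps m"
    using conv_eta_eps_right[OF assms(2)] by simp
  also have "\<dots> = conv N s (conv N id_mon (rinv N)) m"
    by (rule conv_cong) (use conv_id_rinv assms(2) in auto)
  also have "\<dots> = conv N (conv N s id_mon) (rinv N) m"
    by (rule conv_assoc[symmetric]) (rule assms(2))
  also have "\<dots> = conv N eta_eps (rinv N) m"
    by (rule conv_cong) (use assms in auto)
  also have "\<dots> = rinv N m"
    by (rule conv_eta_eps_left) (rule assms(2))
  finally show ?thesis .
qed

section \<open>Reduced trees\<close>

lemma leaf_word_ne: "leaf_word t \<noteq> []"
proof (induction t)
  case (Node c ts)
  then show ?case
    by (cases ts) auto
qed

lemma length_children_le_leaf_word: "length ts \<le> length (leaf_word (Node c ts))"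
  using length_le_length_concat[of "map leaf_word ts"] leaf_word_ne by auto

lemma root_color_mem_colors: "root_color t \<in> colors t"
  by (cases t) simp

lemma RT_Nil: "RT N c [] = {}"
  using leaf_word_ne by (auto simp: RT_def)

lemma RT_singleton: "RT N c [j] = (if c = j \<and> c \<in> {1..N} then {Node c []} else {})"
proof -
  have "T \<in> RT N c [j] \<longleftrightarrow> c = j \<and> c \<in> {1..N} \<and> T = Node c []" for T
  proof (cases T)
    case (Node c' ts)
    have no_children: "ts = []" if T: "T \<in> RT N c [j]"
    proof (rule ccontr)
      assume "ts \<noteq> []"
      with T Node have "2 \<le> length ts"
        by (simp add: RT_def)
      moreover have "length ts \<le> length (leaf_word T)"
        using length_children_le_leaf_word[of ts c'] Node by simp
      ultimately show False
        using T by (simp add: RT_def)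
    qed
    show ?thesis
    proof
      assume T: "T \<in> RT N c [j]"
      with no_children[OF T] Node show "c = j \<and> c \<in> {1..N} \<and> T = Node c []"
        by (simp add: RT_def)
    qed (simp add: RT_def)
  qed
  then show ?thesis by auto
qed

definition signed_Lambda :: "ctree \<Rightarrow> hel" where
  "signed_Lambda T = scale_pm ((-1) ^ nvert T) (Lambda_r T)"

definition tree_sum :: "nat \<Rightarrow> nat \<Rightarrow> nat list \<Rightarrow> hel" where
  "tree_sum N c w = (\<Sum>T\<in>RT N c w. signed_Lambda T)"

lemma tree_sum_singleton: "tree_sum N c [j] = (if c = j \<and> c \<in> {1..N} then hone else 0)"
  by (simp add: tree_sum_def RT_singleton signed_Lambda_def Lambda_r_def)

lemma signed_Lambda_Node:
  assumes "ts \<noteq> []"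
  shows "signed_Lambda (Node i ts) = - hmult (hprod (map signed_Lambda (rev ts))) (Y i (map root_color ts))"
proof -
  have m: "map Lambda_r xs = map (\<lambda>x. hprod (map (\<lambda>(c, w). Y c w) (inner_r x))) xs" for xs
    by (simp add: Lambda_r_def)
  have "Lambda_r (Node i ts) = hmult (hprod (map Lambda_r (rev ts))) (Y i (map root_color ts))"
    using assms unfolding m
    by (simp add: Lambda_r_def hprod_append hprod_map_concat hprod_Cons rev_map comp_def)
  moreover have "hprod (map signed_Lambda (rev ts)) =
      scale_pm ((-1) ^ sum_list (map nvert ts)) (hprod (map Lambda_r (rev ts)))"
  proof -
    have "prod_list (map (\<lambda>t. (-1::complex) ^ nvert t) (rev ts)) = (-1) ^ sum_list (map nvert ts)"
      by (induction ts) (simp_all add: power_add mult.commute)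
    then show ?thesis
      unfolding signed_Lambda_def hprod_scale_pm by simp
  qed
  ultimately show ?thesis
    using assms by (simp add: signed_Lambda_def hmult_eq_bilin scale_pm_minus_one[symmetric])
qed

text \<open>A tree with root color \<open>i\<close> and at least two children is determined by the list of its
  subtrees; their leaf words and root colors form a blocking of its leaf word.\<close>

definition subtree_lists :: "nat \<Rightarrow> nat list \<Rightarrow> ((nat list \<times> nat) list \<times> ctree list) set" where
  "subtree_lists N u = Sigma {bs \<in> blockings N u. 2 \<le> length bs} (choices (\<lambda>b. RT N (snd b) (fst b)))"

lemma subtree_lists_facts:
  assumes "(bs, ts) \<in> subtree_lists N u"
  shows "bs = map (\<lambda>t. (leaf_word t, root_color t)) ts"
    and "\<forall>t\<in>set ts. reduced t \<and> colors t \<subseteq> {1..N}"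
proof -
  have l: "length ts = length bs"
    and tk: "\<And>k. k < length bs \<Longrightarrow> ts ! k \<in> RT N (snd (bs ! k)) (fst (bs ! k))"
    using assms by (auto simp: subtree_lists_def mem_choices_iff)
  show "bs = map (\<lambda>t. (leaf_word t, root_color t)) ts"
    by (rule nth_equalityI) (use l tk in \<open>auto simp: RT_def prod_eq_iff\<close>)
  show "\<forall>t\<in>set ts. reduced t \<and> colors t \<subseteq> {1..N}"
  proof
    fix t assume "t \<in> set ts"
    then obtain k where "k < length ts" "ts ! k = t" by (auto simp: in_set_conv_nth)
    then show "reduced t \<and> colors t \<subseteq> {1..N}" using tk[of k] l by (auto simp: RT_def)
  qed
qed

lemma RT_eq_Node_image:
  assumes "i \<in> {1..N}" "2 \<le> length u"
  shows "RT N i u = (\<lambda>(bs, ts). Node i ts) ` subtree_lists N u"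
proof (intro equalityI subsetI)
  fix T assume T: "T \<in> RT N i u"
  obtain c ts where Tn: "T = Node c ts" by (cases T)
  have "ts \<noteq> []" using T Tn assms(2) by (auto simp: RT_def)
  with T Tn have c: "c = i" and red: "2 \<le> length ts" "\<forall>t\<in>set ts. reduced t"
    and col: "\<forall>t\<in>set ts. colors t \<subseteq> {1..N}" and lw: "concat (map leaf_word ts) = u"
    by (auto simp: RT_def)
  let ?bs = "map (\<lambda>t. (leaf_word t, root_color t)) ts"
  have "?bs \<in> blockings N u"
    using lw col leaf_word_ne root_color_mem_colors by (fastforce simp: blockings_def comp_def)
  moreover have "ts \<in> choices (\<lambda>b. RT N (snd b) (fst b)) ?bs"
    using red col by (auto simp: mem_choices_iff RT_def)
  ultimately have "(?bs, ts) \<in> subtree_lists N u"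
    using red by (simp add: subtree_lists_def)
  then show "T \<in> (\<lambda>(bs, ts). Node i ts) ` subtree_lists N u"
    using Tn c by force
next
  fix T assume "T \<in> (\<lambda>(bs, ts). Node i ts) ` subtree_lists N u"
  then obtain bs ts where x: "(bs, ts) \<in> subtree_lists N u" and T: "T = Node i ts"
    by auto
  have bs: "bs \<in> blockings N u" "2 \<le> length bs"
    using x by (auto simp: subtree_lists_def)
  note facts = subtree_lists_facts[OF x]
  with bs have "concat (map leaf_word ts) = u" "2 \<le> length ts"
    by (auto simp: blockings_def comp_def)
  with facts(2) assms(1) show "T \<in> RT N i u"
    by (auto simp: RT_def T)
qed

lemma inj_on_Node_subtree_lists: "inj_on (\<lambda>(bs, ts). Node i ts) (subtree_lists N u)"
  by (rule inj_onI) (auto dest: subtree_lists_facts(1))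

lemma length_block_less:
  assumes "b \<in> set bs" "2 \<le> length bs" "\<forall>b\<in>set bs. fst b \<noteq> []"
  shows "length (fst b) < length (concat (map fst bs))"
proof -
  have "length (concat (map fst bs)) = length (fst b) + sum_list (map (length \<circ> fst) (remove1 b bs))"
    using assms(1) by (simp add: length_concat sum_list_map_remove1)
  moreover have "1 \<le> length (remove1 b bs)"
    using assms(1,2) by (simp add: length_remove1)
  then obtain b' where b': "b' \<in> set (remove1 b bs)"
    by (cases "remove1 b bs") auto
  then have "1 \<le> length (fst b')"
    using assms(3) set_remove1_subset[of b bs] by (auto simp: Suc_le_eq)
  moreover have "length (fst b') \<le> sum_list (map (length \<circ> fst) (remove1 b bs))"
    using b' by (simp add: member_le_sum_list)
  ultimately show ?thesis by simp
qed

lemma finite_RT: "finite (RT N c w)"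
proof (induction "length w" arbitrary: c w rule: less_induct)
  case less
  show ?case
  proof (cases w rule: word_cases)
    case long: 3
    show ?thesis
    proof (cases "c \<in> {1..N}")
      case True
      have "finite (subtree_lists N w)"
        unfolding subtree_lists_def
      proof (rule finite_SigmaI)
        show "finite {bs \<in> blockings N w. 2 \<le> length bs}"
          using finite_blockings by simp
        fix bs assume bs: "bs \<in> {bs \<in> blockings N w. 2 \<le> length bs}"
        show "finite (choices (\<lambda>b. RT N (snd b) (fst b)) bs)"
        proof (rule finite_choices)
          fix b assume b: "b \<in> set bs"
          have "length (fst b) < length w"
            using length_block_less[OF b] bs by (auto simp: blockings_def)
          then show "finite (RT N (snd b) (fst b))" by (rule less)
        qed
      qed
      then show ?thesis
        unfolding RT_eq_Node_image[OF True long] by simp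
    next
      case False
      have "RT N c w = {}"
      proof (intro equals0I)
        fix T
        assume "T \<in> RT N c w"
        then have "colors T \<subseteq> {1..N}" "root_color T = c"
          by (simp_all add: RT_def)
        with root_color_mem_colors[of T] False show False by blast
      qed
      then show ?thesis by simp
    qed
  qed (simp_all add: RT_Nil RT_singleton)
qed

lemma sum_choices_hprod_rev:
  assumes "\<And>b. b \<in> set bs \<Longrightarrow> finite (A b)"
  shows "(\<Sum>ts\<in>choices A bs. hprod (map F (rev ts))) = hprod (map (\<lambda>b. \<Sum>t\<in>A b. F t) (rev bs))"
proof -
  have "hprod (map (\<lambda>b. \<Sum>t\<in>A b. F t) (rev bs)) =
      (\<Sum>ts\<in>choices A (rev bs). hprod (map (\<lambda>(b, t). F t) (zip (rev bs) ts)))"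
    by (rule hprod_sum) (use assms in auto)
  also have "\<dots> = (\<Sum>ts\<in>choices A (rev bs). hprod (map F ts))"
  proof (rule sum.cong[OF refl])
    fix ts assume "ts \<in> choices A (rev bs)"
    then have "length ts = length (rev bs)" by (simp add: mem_choices_iff)
    moreover have "map (\<lambda>(b, t). F t) (zip (rev bs) ts) = map F (map snd (zip (rev bs) ts))"
      by (simp add: split_def)
    ultimately have "map (\<lambda>(b, t). F t) (zip (rev bs) ts) = map F ts"
      by simp
    then show "hprod (map (\<lambda>(b, t). F t) (zip (rev bs) ts)) = hprod (map F ts)" by simp
  qed
  also have "choices A (rev bs) = rev ` choices A bs"
  proof (intro equalityI subsetI)
    fix ts assume "ts \<in> choices A (rev bs)"
    then have "rev ts \<in> choices A bs" by (simp add: choices_def list_all2_rev1)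
    then show "ts \<in> rev ` choices A bs" by (metis image_eqI rev_rev_ident)
  qed (auto simp: choices_def)
  also have "(\<Sum>ts\<in>rev ` choices A bs. hprod (map F ts)) = (\<Sum>ts\<in>choices A bs. hprod (map F (rev ts)))"
    by (subst sum.reindex) (auto simp: inj_on_def)
  finally show ?thesis by simp
qed

lemma tree_sum_rec:
  assumes "i \<in> {1..N}" "2 \<le> length u"
  shows "tree_sum N i u = - (\<Sum>bs\<in>{bs \<in> blockings N u. 2 \<le> length bs}.
      hmult (hprod (map (\<lambda>b. tree_sum N (snd b) (fst b)) (rev bs))) (Y i (map snd bs)))"
proof -
  have "tree_sum N i u = (\<Sum>(bs, ts)\<in>subtree_lists N u. signed_Lambda (Node i ts))"
    unfolding tree_sum_def RT_eq_Node_image[OF assms]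
    by (subst sum.reindex[OF inj_on_Node_subtree_lists]) (simp add: case_prod_unfold)
  also have "\<dots> = (\<Sum>(bs, ts)\<in>subtree_lists N u.
      - hmult (hprod (map signed_Lambda (rev ts))) (Y i (map snd bs)))"
  proof (rule sum.cong[OF refl], clarify)
    fix bs ts assume x: "(bs, ts) \<in> subtree_lists N u"
    then have "2 \<le> length bs" by (simp add: subtree_lists_def)
    with subtree_lists_facts(1)[OF x] have "ts \<noteq> []" "map snd bs = map root_color ts"
      by auto
    then show "signed_Lambda (Node i ts) =
        - hmult (hprod (map signed_Lambda (rev ts))) (Y i (map snd bs))"
      by (simp add: signed_Lambda_Node)
  qed
  also have "\<dots> = (\<Sum>bs\<in>{bs \<in> blockings N u. 2 \<le> length bs}. \<Sum>ts\<in>choices (\<lambda>b. RT N (snd b) (fst b)) bs.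
       - hmult (hprod (map signed_Lambda (rev ts))) (Y i (map snd bs)))"
    unfolding subtree_lists_def
    by (rule sum.Sigma[symmetric]) (auto intro!: finite_choices finite_RT simp: finite_blockings)
  also have "\<dots> = (\<Sum>bs\<in>{bs \<in> blockings N u. 2 \<le> length bs}.
       - hmult (hprod (map (\<lambda>b. tree_sum N (snd b) (fst b)) (rev bs))) (Y i (map snd bs)))"
    by (intro sum.cong refl)
      (simp add: sum_negf hmult_eq_bilin bilin_sum_left[symmetric] tree_sum_def
        sum_choices_hprod_rev[OF finite_RT, symmetric])
  finally show ?thesis by (simp add: sum_negf)
qed

section \<open>The antipode\<close>

text \<open>An antipode is anti-multiplicative, so on monomials it is the reversed product of its
  values on the generators, which are given by the tree formula.\<close>

definition tree_antipode :: "nat \<Rightarrow> mon \<Rightarrow> hel" where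
  "tree_antipode N m = hprod (map (\<lambda>g. tree_sum N (fst g) (snd g)) (rev m))"

lemma tree_antipode_append: "tree_antipode N (a @ b) = hmult (tree_antipode N b) (tree_antipode N a)"
  by (simp add: tree_antipode_def hprod_append)

lemma lin_ext_tree_antipode_hmult:
  "lin_ext (tree_antipode N) (hmult x y) = hmult (lin_ext (tree_antipode N) y) (lin_ext (tree_antipode N) x)"
proof -
  have "lin_ext (tree_antipode N) (bilin (@) x y) =
      bilin (\<lambda>a b. b @ a) (lin_ext (tree_antipode N) x) (lin_ext (tree_antipode N) y)"
    by (rule lin_ext_bilin) (simp only: tree_antipode_append hmult_eq_bilin bilin_swap[of "(@)"])
  then show ?thesis
    by (simp only: hmult_eq_bilin bilin_swap[of "(@)"])
qed

lemma lin_ext_tree_antipode_hone [simp]: "lin_ext (tree_antipode N) hone = hone"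
  by (simp add: hone_def tree_antipode_def)

lemma lin_ext_tree_antipode_hprod:
  "lin_ext (tree_antipode N) (hprod xs) = hprod (map (lin_ext (tree_antipode N)) (rev xs))"
  by (induction xs) (simp_all add: hprod_Cons lin_ext_tree_antipode_hmult hprod_append)

lemma lin_ext_tree_antipode_Y:
  assumes "c \<in> {1..N}" "w \<noteq> []"
  shows "lin_ext (tree_antipode N) (Y c w) = tree_sum N c w"
  using assms
  by (cases w rule: word_cases) (simp_all add: Y_singleton Y_long tree_sum_singleton tree_antipode_def hprod_Cons)

lemma short_blockings:
  assumes "u \<noteq> []"
  shows "blockings N u - {bs. 2 \<le> length bs} = (\<lambda>c. [(u, c)]) ` {1..N}"
proof (intro equalityI subsetI)
  fix bs assume bs: "bs \<in> blockings N u - {bs. 2 \<le> length bs}"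
  then have c: "concat (map fst bs) = u" and v: "\<forall>b\<in>set bs. fst b \<noteq> [] \<and> snd b \<in> {1..N}"
    and l: "length bs < 2" by (auto simp: blockings_def)
  with assms obtain b where b: "bs = [b]"
    by (cases bs rule: word_cases) auto
  with c v show "bs \<in> (\<lambda>c. [(u, c)]) ` {1..N}"
    by (cases b) auto
qed (use assms in \<open>auto simp: blockings_def\<close>)

lemma conv_tree_antipode_id_gen:
  assumes "valid_gen N (i, u)"
  shows "conv N (tree_antipode N) id_mon [(i, u)] = 0"
proof -
  have u: "set u \<subseteq> {1..N}" "2 \<le> length u" "i \<in> {1..N}" "u \<noteq> []"
    using assms by (auto simp: valid_gen_def)
  define G where
    "G bs = hmult (hprod (map (\<lambda>b. tree_sum N (snd b) (fst b)) (rev bs))) (Y i (map snd bs))" for bs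
  have "conv N (tree_antipode N) id_mon [(i, u)] =
      (\<Sum>bs\<in>blockings N u. hmult (lin_ext (tree_antipode N) (block_prod bs)) (Y i (map snd bs)))"
    unfolding conv_def id_mon_def Delta_mon_single Delta_gen_eq_blockings lin_ext_sum hmult_eq_bilin tens_eq_bilin
    by (simp add: lin_ext_bilin_split[where F="tree_antipode N" and G="\<lambda>c. Poly_Mapping.single c 1"])
  also have "\<dots> = (\<Sum>bs\<in>blockings N u. G bs)"
  proof (rule sum.cong[OF refl])
    fix bs assume bs: "bs \<in> blockings N u"
    have "lin_ext (tree_antipode N) (block_prod bs) =
        hprod (map (\<lambda>b. lin_ext (tree_antipode N) (Y (snd b) (fst b))) (rev bs))"
      by (simp add: block_prod_def lin_ext_tree_antipode_hprod rev_map comp_def)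
    also have "\<dots> = hprod (map (\<lambda>b. tree_sum N (snd b) (fst b)) (rev bs))"
      by (rule arg_cong[where f=hprod], rule map_cong[OF refl])
        (use bs in \<open>auto simp: blockings_def intro!: lin_ext_tree_antipode_Y\<close>)
    finally show "hmult (lin_ext (tree_antipode N) (block_prod bs)) (Y i (map snd bs)) = G bs"
      by (simp add: G_def)
  qed
  also have "\<dots> = (\<Sum>bs\<in>blockings N u \<inter> {bs. 2 \<le> length bs}. G bs) +
      (\<Sum>bs\<in>blockings N u - {bs. 2 \<le> length bs}. G bs)"
    by (rule sum.Int_Diff) (rule finite_blockings)
  also have "blockings N u \<inter> {bs. 2 \<le> length bs} = {bs \<in> blockings N u. 2 \<le> length bs}"
    by auto
  also have "(\<Sum>bs\<in>{bs \<in> blockings N u. 2 \<le> length bs}. G bs) = - tree_sum N i u"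
    using tree_sum_rec[OF u(3) u(2)] by (simp add: G_def)
  also have "(\<Sum>bs\<in>blockings N u - {bs. 2 \<le> length bs}. G bs) = (\<Sum>c\<in>{1..N}. G [(u, c)])"
    unfolding short_blockings[OF u(4)] by (subst sum.reindex) (auto simp: inj_on_def)
  also have "\<dots> = (\<Sum>c\<in>{1..N}. if c = i then tree_sum N i u else 0)"
    by (rule sum.cong[OF refl]) (simp add: G_def hprod_Cons Y_singleton)
  also have "\<dots> = tree_sum N i u"
    using u(3) by simp
  finally show ?thesis by simp
qed

lemma conv_tree_antipode_id:
  assumes "valid_mon N m"
  shows "conv N (tree_antipode N) id_mon m = eta_eps m"
proof (cases m)
  case Nil
  then show ?thesis
    by (simp add: conv_def hhone_def id_mon_def eta_eps_def hone_def hmult_eq_bilin tree_antipode_def)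
next
  case (Cons g m')
  obtain i u where g: "g = (i, u)" by (cases g)
  have "valid_gen N (i, u)" using assms Cons g by (simp add: valid_mon_def)
  define \<psi> where "\<psi> p = hmult (tree_antipode N (fst p)) (id_mon (snd p))" for p
  have gen: "lin_ext \<psi> (Delta_gen N g) = 0"
    using conv_tree_antipode_id_gen[OF \<open>valid_gen N (i, u)\<close>] g by (simp add: conv_def \<psi>_def[abs_def])
  have \<psi>: "\<psi> (pair_append p q) =
      hmult (tree_antipode N (fst q)) (hmult (\<psi> p) (Poly_Mapping.single (snd q) 1))" for p q
    by (simp add: \<psi>_def id_mon_def pair_append_def tree_antipode_append single_append
        hmult_eq_bilin[symmetric] hmult_assoc)
  have "conv N (tree_antipode N) id_mon m = lin_ext \<psi> (bilin pair_append (Delta_gen N g) (Delta_mon N m'))"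
    by (simp add: conv_def \<psi>_def[abs_def] Cons Delta_mon_Cons)
  also have "\<dots> = lin_ext (\<lambda>q. lin_ext (\<lambda>p. hmult (tree_antipode N (fst q))
      (hmult (\<psi> p) (Poly_Mapping.single (snd q) 1))) (Delta_gen N g)) (Delta_mon N m')"
    unfolding bilin_def lin_ext_lin_ext lin_ext_single scale_pm_one \<psi> by (rule lin_ext_swap)
  also have "\<dots> = lin_ext (\<lambda>q. hmult (tree_antipode N (fst q))
      (hmult (lin_ext \<psi> (Delta_gen N g)) (Poly_Mapping.single (snd q) 1))) (Delta_mon N m')"
    by (simp add: hmult_eq_bilin bilin_lin_ext_left bilin_lin_ext_right)
  also have "\<dots> = 0"
    by (simp add: gen)
  finally show ?thesis
    using Cons by (simp add: eta_eps_def)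
qed

definition antipode_basis :: "nat \<Rightarrow> mon \<Rightarrow> hel" where
  "antipode_basis N m = (if valid_mon N m then tree_antipode N m else 0)"

lemma conv_antipode_basis_id: "valid_mon N m \<Longrightarrow> conv N (antipode_basis N) id_mon m = eta_eps m"
  using conv_cong[of N "antipode_basis N" "tree_antipode N" id_mon id_mon m] conv_tree_antipode_id
  by (simp add: antipode_basis_def)

lemma antipode_basis_eq_rinv: "valid_mon N m \<Longrightarrow> antipode_basis N m = rinv N m"
  by (rule left_inverse_unique) (rule conv_antipode_basis_id)

lemma conv_id_antipode_basis: "valid_mon N m \<Longrightarrow> conv N id_mon (antipode_basis N) m = eta_eps m"
  using conv_cong[of N id_mon id_mon "antipode_basis N" "rinv N" m] conv_id_rinv antipode_basis_eq_rinv
  by simp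

lemma conv_left_eq_lin_ext:
  "conv_left N S x = lin_ext (conv N (\<lambda>k. S (Poly_Mapping.single k 1)) id_mon) x"
proof -
  have "conv_left N S x = lin_ext (\<lambda>p. hmult (S (Poly_Mapping.single (fst p) 1)) (id_mon (snd p))) (Delta N x)"
    by (simp add: conv_left_def lin_ext_def hscale_eq_scale_pm id_mon_def)
  then show ?thesis
    by (simp add: Delta_eq_lin_ext lin_ext_lin_ext conv_def[abs_def])
qed

lemma conv_right_eq_lin_ext:
  "conv_right N S x = lin_ext (conv N id_mon (\<lambda>k. S (Poly_Mapping.single k 1))) x"
proof -
  have "conv_right N S x = lin_ext (\<lambda>p. hmult (id_mon (fst p)) (S (Poly_Mapping.single (snd p) 1))) (Delta N x)"
    by (simp add: conv_right_def lin_ext_def hscale_eq_scale_pm id_mon_def)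
  then show ?thesis
    by (simp add: Delta_eq_lin_ext lin_ext_lin_ext conv_def[abs_def])
qed

lemma lin_ext_eta_eps: "lin_ext eta_eps x = hscale (eps x) hone"
  unfolding eta_eps_def eps_def hscale_eq_scale_pm by (rule lin_ext_delta)

lemma is_linear_iff: "is_linear S \<longleftrightarrow> S = lin_ext (\<lambda>m. S (Poly_Mapping.single m 1))"
  by (auto simp: is_linear_def lin_ext_def hscale_eq_scale_pm fun_eq_iff)

definition is_antipode :: "nat \<Rightarrow> (hel \<Rightarrow> hel) \<Rightarrow> bool" where
  "is_antipode N S \<longleftrightarrow> is_linear S
      \<and> (\<forall>m. \<not> valid_mon N m \<longrightarrow> S (Poly_Mapping.single m 1) = 0)
      \<and> (\<forall>x\<in>Hcarrier N. conv_left N S x = hscale (eps x) hone)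
      \<and> (\<forall>x\<in>Hcarrier N. conv_right N S x = hscale (eps x) hone)"

lemma is_antipode_lin_ext_antipode_basis: "is_antipode N (lin_ext (antipode_basis N))"
  unfolding is_antipode_def
proof (intro conjI allI ballI impI)
  show "is_linear (lin_ext (antipode_basis N))"
    by (simp add: is_linear_iff)
next
  fix m assume "\<not> valid_mon N m"
  then show "lin_ext (antipode_basis N) (Poly_Mapping.single m 1) = 0"
    by (simp add: antipode_basis_def)
next
  fix x assume x: "x \<in> Hcarrier N"
  have "conv_left N (lin_ext (antipode_basis N)) x = lin_ext eta_eps x"
    unfolding conv_left_eq_lin_ext
    using x by (intro lin_ext_cong) (simp add: Hcarrier_def conv_antipode_basis_id)
  then show "conv_left N (lin_ext (antipode_basis N)) x = hscale (eps x) hone"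
    by (simp add: lin_ext_eta_eps)
  have "conv_right N (lin_ext (antipode_basis N)) x = lin_ext eta_eps x"
    unfolding conv_right_eq_lin_ext
    using x by (intro lin_ext_cong) (simp add: Hcarrier_def conv_id_antipode_basis)
  then show "conv_right N (lin_ext (antipode_basis N)) x = hscale (eps x) hone"
    by (simp add: lin_ext_eta_eps)
qed

lemma is_antipode_unique:
  assumes "is_antipode N S"
  shows "S = lin_ext (antipode_basis N)"
proof -
  define t where "t m = S (Poly_Mapping.single m 1)" for m
  have linear: "is_linear S" and vanish: "\<And>m. \<not> valid_mon N m \<Longrightarrow> S (Poly_Mapping.single m 1) = 0"
    and left: "\<And>x. x \<in> Hcarrier N \<Longrightarrow> conv_left N S x = hscale (eps x) hone"
    using assms unfolding is_antipode_def by simp_all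
  from linear have lin: "S = lin_ext t"
    unfolding is_linear_iff t_def[abs_def] .
  have left_inverse: "conv N t id_mon x = eta_eps x" if x: "valid_mon N x" for x
  proof -
    have "Poly_Mapping.single x 1 \<in> Hcarrier N"
      using x by (simp add: Hcarrier_def)
    then have "conv_left N S (Poly_Mapping.single x 1) = hscale (eps (Poly_Mapping.single x 1)) hone"
      by (rule left)
    moreover have "conv_left N S (Poly_Mapping.single x 1) = conv N t id_mon x"
      by (simp add: conv_left_eq_lin_ext t_def[symmetric])
    moreover have "hscale (eps (Poly_Mapping.single x 1)) hone = eta_eps x"
      by (simp add: eps_def hscale_eq_scale_pm eta_eps_def lookup_single when_def)
    ultimately show ?thesis by simp
  qed
  have "t m = antipode_basis N m" for m
  proof (cases "valid_mon N m")
    case True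
    then show ?thesis
      using left_inverse_unique[of N t m, OF left_inverse] antipode_basis_eq_rinv by simp
  next
    case False
    then show ?thesis
      by (simp add: vanish t_def antipode_basis_def)
  qed
  then have "t = antipode_basis N" ..
  with lin show ?thesis by simp
qed

lemma antipode_eq_lin_ext: "antipode N = lin_ext (antipode_basis N)"
proof -
  have "antipode N = (THE S. is_antipode N S)"
    by (simp add: antipode_def is_antipode_def)
  also have "\<dots> = lin_ext (antipode_basis N)"
    using is_antipode_lin_ext_antipode_basis is_antipode_unique by blast
  finally show ?thesis .
qed

theorem corollary3:
  fixes N i :: nat and u :: "nat list"
  assumes "1 \<le> N" and "i \<in> {1..N}" and "set u \<subseteq> {1..N}" and "2 \<le> length u"
  shows "antipode N (Y i u) = (\<Sum>T\<in>RT N i u. hscale ((-1) ^ nvert T) (Lambda_r T))"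
proof -
  have "valid_mon N [(i, u)]"
    using assms by (simp add: valid_mon_def valid_gen_def)
  then have "antipode N (Y i u) = tree_sum N i u"
    using assms(4) by (simp add: antipode_eq_lin_ext Y_long antipode_basis_def tree_antipode_def hprod_Cons)
  then show ?thesis
    by (simp add: tree_sum_def signed_Lambda_def hscale_eq_scale_pm)
qed

end
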